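(* Assume the setup of the context with $F$ formally real, and fix a $\ast$-symmetric basis $B$ of $H$. Let $\rho:H\to K^{d\times d}$ be an irreducible matrix representation of isomorphism type $\lambda\in\Lambda$. (a) Suppose there is $\Omega\in\mathcal{O}^{d\times d}$ with $\Omega\rho(x)=\rho(x^\ast)^T\Omega$ for all $x\in B$ such that $\Omega+\mathfrak{m}^{d\times d}$ is an invertible diagonal matrix $\mathrm{diag}(d_1,\dots,d_d)\in GL_d(F)$. Then $a_\lambda\in\Gamma$ and $\rho$ is balanced; moreover, for any $v^{a_\lambda}\in K$ with $\nu(v^{a_\lambda})=a_\lambda$, the matrices $c(x):=v^{a_\lambda}\rho(x)\bmod\mathfrak{m}\in F^{d\times d}$ satisfy $d_{\mathfrak t}\,c(x^\ast)_{\mathfrak{ts}}=d_{\mathfrak s}\,c(x)_{\mathfrak{st}}$ for all $x\in B$ and all $\mathfrak s,\mathfrak t$. (b) Suppose there is a symmetric $\Omega\in GL_d(\mathcal{O})$ with $\Omega\rho(x)=\rho(x^\ast)^T\Omega$ for all $x\in B$. Then $a_\lambda\in\Gamma$ and $\rho$ is balanced.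
   Context: Setup: $\Gamma$ a totally ordered abelian group; $K$ a field with surjective valuation $\nu:K\to\Gamma\cup\{\infty\}$, valuation ring $\mathcal{O}$, maximal ideal $\mathfrak{m}$, residue field $F=\mathcal{O}/\mathfrak{m}$; $\nu$ of a matrix is the minimum of the valuations of its entries. $F$ formally real means $-1$ is not a sum of squares in $F$. $H$ is a finite-dimensional split semisimple $K$-algebra which is symmetric with respect to a $K$-linear trace form $\tau:H\to K$ ($\tau(ab)=\tau(ba)$, $(a,b)\mapsto\tau(ab)$ nondegenerate). $\Lambda$ indexes the simple $H$-modules, $\chi_\lambda$ is the character of type $\lambda$, and the Schur elements $c_\lambda\in K^\times$ are defined by $\tau=\sum_{\lambda\in\Lambda}c_\lambda^{-1}\chi_\lambda$. $\ast:H\to H$ is a $K$-linear antiautomorphism with $h^{\ast\ast}=h$. A $\ast$-symmetric basis is a $K$-basis $B$ of $H$ with $B^\ast=B$ and $\tau(bc^\ast)=\delta_{bc}$ for all $b,c\in B$; one is assumed to exist. Put $a_\lambda:=-\tfrac12\nu(c_\lambda)\in\tfrac12\Gamma$. An irreducible matrix representation $\rho:H\to K^{d\times d}$ of type $\lambda$ is called balanced if $a_\lambda\in\Gamma$ and $\nu(\rho(b))\ge-a_\lambda$ for all $b\in B'$, for every $\ast$-symmetric basis $B'$ of $H$. *)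

theory Defs
  imports Main "Jordan_Normal_Form.Matrix"
begin

text \<open>The valuation is modelled as nu :: 'k => 'g; the value nu 0 is irrelevant
  and plays the role of infinity (every statement about values is guarded by x \<noteq> 0).\<close>

definition valuation :: "('k::field \<Rightarrow> 'g::linordered_ab_group_add) \<Rightarrow> bool" where
  "valuation nu \<longleftrightarrow>
     (\<forall>x y. x \<noteq> 0 \<and> y \<noteq> 0 \<longrightarrow> nu (x * y) = nu x + nu y) \<and>
     (\<forall>x y. x \<noteq> 0 \<and> y \<noteq> 0 \<and> x + y \<noteq> 0 \<longrightarrow> min (nu x) (nu y) \<le> nu (x + y))"

definition surj_valuation :: "('k::field \<Rightarrow> 'g::linordered_ab_group_add) \<Rightarrow> bool" where
  "surj_valuation nu \<longleftrightarrow> valuation nu \<and> (\<forall>g. \<exists>x. x \<noteq> 0 \<and> nu x = g)"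

definition val_ring :: "('k::field \<Rightarrow> 'g::linordered_ab_group_add) \<Rightarrow> 'k set" where
  "val_ring nu = {x. x = 0 \<or> 0 \<le> nu x}"

definition val_ideal :: "('k::field \<Rightarrow> 'g::linordered_ab_group_add) \<Rightarrow> 'k set" where
  "val_ideal nu = {x. x = 0 \<or> 0 < nu x}"

text \<open>Residue field F = O/m formally real: -1 is not a sum of squares in F, i.e. for
  no x_1..x_n in O is 1 + sum x_i^2 in m.\<close>
definition residue_formally_real :: "('k::field \<Rightarrow> 'g::linordered_ab_group_add) \<Rightarrow> bool" where
  "residue_formally_real nu \<longleftrightarrow>
     (\<forall>xs. set xs \<subseteq> val_ring nu \<longrightarrow> 1 + sum_list (map (\<lambda>x. x * x) xs) \<notin> val_ideal nu)"

definition mat_val_ge :: "('k::field \<Rightarrow> 'g::linordered_ab_group_add) \<Rightarrow> 'k mat \<Rightarrow> 'g \<Rightarrow> bool" where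
  "mat_val_ge nu A g \<longleftrightarrow>
     (\<forall>i < dim_row A. \<forall>j < dim_col A. A $$ (i,j) = 0 \<or> g \<le> nu (A $$ (i,j)))"

definition mat_over :: "'k set \<Rightarrow> 'k mat \<Rightarrow> bool" where
  "mat_over R A \<longleftrightarrow> (\<forall>i < dim_row A. \<forall>j < dim_col A. A $$ (i,j) \<in> R)"

definition K_algebra :: "('k::field \<Rightarrow> 'h::ring_1 \<Rightarrow> 'h) \<Rightarrow> bool" where
  "K_algebra smul \<longleftrightarrow> vector_space smul \<and>
     (\<forall>c a b. smul c (a * b) = smul c a * b \<and> smul c (a * b) = a * smul c b)"

definition is_K_basis :: "('k::field \<Rightarrow> 'h::ring_1 \<Rightarrow> 'h) \<Rightarrow> 'h set \<Rightarrow> bool" where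
  "is_K_basis smul B \<longleftrightarrow> \<not> module.dependent smul B \<and> module.span smul B = UNIV"

definition matrix_rep :: "('k::field \<Rightarrow> 'h::ring_1 \<Rightarrow> 'h) \<Rightarrow> ('h \<Rightarrow> 'k mat) \<Rightarrow> nat \<Rightarrow> bool" where
  "matrix_rep smul rho d \<longleftrightarrow>
     (\<forall>h. rho h \<in> carrier_mat d d) \<and> rho 1 = 1\<^sub>m d \<and>
     (\<forall>a b. rho (a * b) = rho a * rho b) \<and>
     (\<forall>a b. rho (a + b) = rho a + rho b) \<and>
     (\<forall>c a. rho (smul c a) = c \<cdot>\<^sub>m rho a)"

definition irreducible_rep :: "('k::field \<Rightarrow> 'h::ring_1 \<Rightarrow> 'h) \<Rightarrow> ('h \<Rightarrow> 'k mat) \<Rightarrow> nat \<Rightarrow> bool" where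
  "irreducible_rep smul rho d \<longleftrightarrow> matrix_rep smul rho d \<and> 0 < d \<and>
     (\<forall>W. W \<subseteq> carrier_vec d \<and> 0\<^sub>v d \<in> W \<and>
          (\<forall>v\<in>W. \<forall>w\<in>W. v + w \<in> W) \<and> (\<forall>c. \<forall>v\<in>W. c \<cdot>\<^sub>v v \<in> W) \<and>
          (\<forall>h. \<forall>v\<in>W. rho h *\<^sub>v v \<in> W)
        \<longrightarrow> W = {0\<^sub>v d} \<or> W = carrier_vec d)"

text \<open>Split semisimple (Wedderburn form): there are irreducible matrix representations
  rho_1,...,rho_r such that h |-> (rho_1 h, ..., rho_r h) is an isomorphism of H onto the
  product of the full matrix algebras K^{d_i x d_i}.\<close>
definition split_semisimple :: "('k::field \<Rightarrow> 'h::ring_1 \<Rightarrow> 'h) \<Rightarrow> bool" where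
  "split_semisimple smul \<longleftrightarrow> K_algebra smul \<and>
     (\<exists>rs :: (('h \<Rightarrow> 'k mat) \<times> nat) list.
        (\<forall>(r, n) \<in> set rs. irreducible_rep smul r n) \<and>
        bij_betw (\<lambda>h. map (\<lambda>(r, n). r h) rs) UNIV
          {Ms. length Ms = length rs \<and>
               (\<forall>i < length rs. Ms ! i \<in> carrier_mat (snd (rs ! i)) (snd (rs ! i)))})"

definition symmetrizing_trace :: "('k::field \<Rightarrow> 'h::ring_1 \<Rightarrow> 'h) \<Rightarrow> ('h \<Rightarrow> 'k) \<Rightarrow> bool" where
  "symmetrizing_trace smul tau \<longleftrightarrow>
     (\<forall>a b. tau (a + b) = tau a + tau b) \<and> (\<forall>c a. tau (smul c a) = c * tau a) \<and>
     (\<forall>a b. tau (a * b) = tau (b * a)) \<and>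
     (\<forall>a. (\<forall>b. tau (a * b) = 0) \<longrightarrow> a = 0)"

definition involutive_antiaut :: "('k::field \<Rightarrow> 'h::ring_1 \<Rightarrow> 'h) \<Rightarrow> ('h \<Rightarrow> 'h) \<Rightarrow> bool" where
  "involutive_antiaut smul star \<longleftrightarrow>
     (\<forall>a b. star (a + b) = star a + star b) \<and> (\<forall>c a. star (smul c a) = smul c (star a)) \<and>
     (\<forall>a b. star (a * b) = star b * star a) \<and> (\<forall>a. star (star a) = a)"

definition star_symmetric_basis ::
  "('k::field \<Rightarrow> 'h::ring_1 \<Rightarrow> 'h) \<Rightarrow> ('h \<Rightarrow> 'k) \<Rightarrow> ('h \<Rightarrow> 'h) \<Rightarrow> 'h set \<Rightarrow> bool" where
  "star_symmetric_basis smul tau star B \<longleftrightarrow> is_K_basis smul B \<and> star ` B = B \<and>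
     (\<forall>b\<in>B. \<forall>c\<in>B. tau (b * star c) = (if b = c then 1 else 0))"

text \<open>Characters; the isomorphism types Lambda of simple H-modules are indexed by their
  characters chi_lambda (distinct simple modules of a split semisimple algebra have
  distinct characters).\<close>
definition character :: "('h \<Rightarrow> 'k::field mat) \<Rightarrow> 'h \<Rightarrow> 'k" where
  "character rho = (\<lambda>h. \<Sum>i < dim_row (rho h). rho h $$ (i,i))"

definition irr_chars :: "('k::field \<Rightarrow> 'h::ring_1 \<Rightarrow> 'h) \<Rightarrow> ('h \<Rightarrow> 'k) set" where
  "irr_chars smul = {character rho | rho d. irreducible_rep smul rho d}"

definition schur_elements ::
  "('k::field \<Rightarrow> 'h::ring_1 \<Rightarrow> 'h) \<Rightarrow> ('h \<Rightarrow> 'k) \<Rightarrow> (('h \<Rightarrow> 'k) \<Rightarrow> 'k) \<Rightarrow> bool" where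
  "schur_elements smul tau c \<longleftrightarrow> finite (irr_chars smul) \<and>
     (\<forall>chi \<in> irr_chars smul. c chi \<noteq> 0) \<and>
     (\<forall>h. tau h = (\<Sum>chi \<in> irr_chars smul. inverse (c chi) * chi h))"

text \<open>Balanced: a_lambda = -nu(c_lambda)/2 lies in Gamma, and nu(rho b) \<ge> -a_lambda
  for every b in every *-symmetric basis.  Here cl = c_lambda.\<close>
definition balanced ::
  "('k::field \<Rightarrow> 'g::linordered_ab_group_add) \<Rightarrow> ('k \<Rightarrow> 'h::ring_1 \<Rightarrow> 'h) \<Rightarrow> ('h \<Rightarrow> 'k) \<Rightarrow>
   ('h \<Rightarrow> 'h) \<Rightarrow> 'k \<Rightarrow> ('h \<Rightarrow> 'k mat) \<Rightarrow> bool" where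
  "balanced nu smul tau star cl rho \<longleftrightarrow>
     (\<exists>a. nu cl = - (a + a) \<and>
        (\<forall>B'. star_symmetric_basis smul tau star B' \<longrightarrow>
           (\<forall>b\<in>B'. mat_val_ge nu (rho b) (- a))))"

end

theory Submission
  imports Defs
begin

text \<open>By the Wedderburn decomposition \<open>\<rho>\<close> is conjugate to one block of \<open>H\<close>, on which the
  trace form is \<open>c\<^sub>\<lambda>\<^sup>-\<^sup>1 \<chi>\<^sub>\<lambda>\<close>; expanding the matrix units of that block in the dual basis of a
  \<open>\<ast>\<close>-symmetric basis \<open>B\<close> gives the Schur relations
  \<open>\<Sum>\<^sub>b \<rho>(b)\<^sub>i\<^sub>j \<rho>(b\<^sup>\<ast>)\<^sub>k\<^sub>l = c\<^sub>\<lambda> \<delta>\<^sub>i\<^sub>l \<delta>\<^sub>j\<^sub>k\<close>.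
  Let \<open>m\<close> be the least valuation of an entry \<open>\<rho>(b)\<^sub>s\<^sub>t\<close> and rescale by \<open>v\<close> with \<open>\<nu>(v) = -m\<close>,
  so that all \<open>v \<rho>(b)\<close> are integral and \<open>v \<rho>(b\<^sub>0)\<^sub>s\<^sub>t\<close> is a unit. The Schur relation
  \<open>\<Sum>\<^sub>b v\<rho>(b)\<^sub>s\<^sub>t v\<rho>(b\<^sup>\<ast>)\<^sub>t\<^sub>s = v\<^sup>2 c\<^sub>\<lambda>\<close> puts \<open>v\<^sup>2 c\<^sub>\<lambda>\<close> in \<open>\<O>\<close>, and the form \<open>\<Omega>\<close>
  identifies \<open>v\<^sup>2 c\<^sub>\<lambda>\<close>, up to a unit and modulo \<open>\<mathfrak>m\<close>, with the sum of squares
  \<open>\<Sum>\<^sub>b (v\<rho>(b)\<^sub>s\<^sub>t)\<^sup>2\<close>, which is a unit because \<open>F\<close> is formally real. Hence \<open>\<nu>(c\<^sub>\<lambda>) = 2m\<close>,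
  i.e. \<open>a\<^sub>\<lambda> = -m\<close> and \<open>\<nu>(\<rho>(b)) \<ge> -a\<^sub>\<lambda>\<close>. The hypothesis on \<open>\<Omega>\<close> extends linearly from \<open>B\<close> to all
  of \<open>H\<close>, so the same bound holds for every \<open>\<ast>\<close>-symmetric basis.\<close>

section \<open>Valuation rings\<close>

context
  fixes nu :: "'k::field \<Rightarrow> 'g::linordered_ab_group_add"
  assumes val: "valuation nu"
begin

lemma val_mult: "x \<noteq> 0 \<Longrightarrow> y \<noteq> 0 \<Longrightarrow> nu (x * y) = nu x + nu y"
  using val unfolding valuation_def by blast

lemma val_add_ge: "x \<noteq> 0 \<Longrightarrow> y \<noteq> 0 \<Longrightarrow> x + y \<noteq> 0 \<Longrightarrow> min (nu x) (nu y) \<le> nu (x + y)"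
  using val unfolding valuation_def by blast

lemma val_one: "nu 1 = 0"
  using val_mult[of 1 1] by simp

lemma val_uminus: "nu (- x) = nu x"
proof (cases "x = 0")
  case False
  have "nu ((-1) * (-1)) = nu (-1) + nu (-1)" by (rule val_mult) auto
  then have "nu (-1) = 0" using val_one by simp
  then show ?thesis using val_mult[of "-1" x] False by simp
qed simp

lemma val_inverse: "x \<noteq> 0 \<Longrightarrow> nu (inverse x) = - nu x"
  using val_mult[of x "inverse x"] val_one by (simp add: eq_neg_iff_add_eq_0 add.commute)

lemma val_ring_zero: "0 \<in> val_ring nu"
  unfolding val_ring_def by simp

lemma val_ring_one: "1 \<in> val_ring nu"
  unfolding val_ring_def using val_one by simp

lemma val_ideal_zero: "0 \<in> val_ideal nu"
  unfolding val_ideal_def by simp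

lemma val_ring_add: assumes "x \<in> val_ring nu" "y \<in> val_ring nu" shows "x + y \<in> val_ring nu"
proof (cases "x = 0 \<or> y = 0 \<or> x + y = 0")
  case True then show ?thesis using assms by (auto simp: val_ring_def)
next
  case False
  then have "min (nu x) (nu y) \<le> nu (x + y)" using val_add_ge by blast
  moreover have "0 \<le> min (nu x) (nu y)" using assms False by (simp add: val_ring_def)
  ultimately have "0 \<le> nu (x + y)" by (rule order_trans[rotated])
  then show ?thesis unfolding val_ring_def by simp
qed

lemma val_ring_mult: assumes "x \<in> val_ring nu" "y \<in> val_ring nu" shows "x * y \<in> val_ring nu"
proof (cases "x = 0 \<or> y = 0")
  case False
  then have "nu (x * y) = nu x + nu y" using val_mult by blast
  moreover have "0 \<le> nu x" "0 \<le> nu y" using assms False by (auto simp: val_ring_def)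
  ultimately show ?thesis unfolding val_ring_def by simp
qed (auto simp: val_ring_def)

lemma val_ring_sum: "(\<And>x. x \<in> S \<Longrightarrow> f x \<in> val_ring nu) \<Longrightarrow> sum f S \<in> val_ring nu"
  by (induction S rule: infinite_finite_induct) (auto intro: val_ring_add val_ring_zero)

lemma val_ideal_add: assumes "x \<in> val_ideal nu" "y \<in> val_ideal nu" shows "x + y \<in> val_ideal nu"
proof (cases "x = 0 \<or> y = 0 \<or> x + y = 0")
  case True then show ?thesis using assms by (auto simp: val_ideal_def)
next
  case False
  then have "min (nu x) (nu y) \<le> nu (x + y)" using val_add_ge by blast
  moreover have "0 < min (nu x) (nu y)" using assms False by (simp add: val_ideal_def)
  ultimately have "0 < nu (x + y)" by (rule order.strict_trans2[rotated])
  then show ?thesis unfolding val_ideal_def by simp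
qed

lemma val_ideal_diff: "x \<in> val_ideal nu \<Longrightarrow> y \<in> val_ideal nu \<Longrightarrow> x - y \<in> val_ideal nu"
  using val_ideal_add[of x "- y"] val_uminus[of y] by (simp add: val_ideal_def)

lemma val_ideal_mult: assumes "x \<in> val_ideal nu" "y \<in> val_ring nu" shows "x * y \<in> val_ideal nu"
proof (cases "x = 0 \<or> y = 0")
  case False
  then have "nu (x * y) = nu x + nu y" using val_mult by blast
  moreover have "0 < nu x" "0 \<le> nu y" using assms False by (auto simp: val_ring_def val_ideal_def)
  ultimately show ?thesis unfolding val_ideal_def by (simp add: add_pos_nonneg)
qed (auto simp: val_ideal_def)

lemma val_ideal_sum: "(\<And>x. x \<in> S \<Longrightarrow> f x \<in> val_ideal nu) \<Longrightarrow> sum f S \<in> val_ideal nu"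
  by (induction S rule: infinite_finite_induct) (auto intro: val_ideal_add val_ideal_zero)

lemma val_unit: "x \<in> val_ring nu \<Longrightarrow> x \<notin> val_ideal nu \<Longrightarrow> x \<noteq> 0 \<and> nu x = 0"
  unfolding val_ring_def val_ideal_def by auto

lemma val_unit_mult:
  assumes "x \<in> val_ring nu" "x \<notin> val_ideal nu" "y \<in> val_ring nu" "y \<notin> val_ideal nu"
  shows "x * y \<notin> val_ideal nu"
proof -
  have "x \<noteq> 0" "nu x = 0" "y \<noteq> 0" "nu y = 0" using val_unit assms by blast+
  then show ?thesis using val_mult[of x y] by (simp add: val_ideal_def)
qed

lemma val_ring_scaled:
  assumes x: "x = 0 \<or> a \<le> nu x" and v: "v \<noteq> 0" "nu v = - a"
  shows "v * x \<in> val_ring nu"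
proof (cases "x = 0")
  case False
  then have "nu (v * x) = - a + nu x" using val_mult v by simp
  moreover have "a \<le> nu x" using x False by simp
  ultimately show ?thesis unfolding val_ring_def by (simp add: le_minus_iff add.commute[of "- a"] le_diff_eq[symmetric])
qed (simp add: val_ring_def)

lemma sum_squares_notin_val_ideal:
  assumes fr: "residue_formally_real nu" and fin: "finite S"
    and f: "\<And>x. x \<in> S \<Longrightarrow> f x \<in> val_ring nu" and x0: "x0 \<in> S" "f x0 \<notin> val_ideal nu"
  shows "(\<Sum>x\<in>S. f x * f x) \<notin> val_ideal nu"
proof
  assume in_ideal: "(\<Sum>x\<in>S. f x * f x) \<in> val_ideal nu"
  define u where "u = f x0"
  have u: "u \<noteq> 0" "nu u = 0" using val_unit f x0 unfolding u_def by blast+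
  define g where "g x = f x / u" for x
  have g: "g x \<in> val_ring nu" if "x \<in> S" for x
  proof (cases "f x = 0")
    case False
    then have "nu (g x) = nu (f x)"
      using val_mult[of "f x" "inverse u"] val_inverse[of u] u by (simp add: g_def divide_inverse)
    then show ?thesis using f[OF that] False unfolding val_ring_def g_def by auto
  qed (simp add: g_def val_ring_def)
  obtain xs where xs: "set xs = S - {x0}" "distinct xs"
    using finite_distinct_list[of "S - {x0}"] fin by auto
  define w where "w = 1 + (\<Sum>x\<in>S - {x0}. g x * g x)"
  have "w = 1 + sum_list (map (\<lambda>x. x * x) (map g xs))"
    unfolding w_def using xs by (simp add: sum_list_distinct_conv_sum_set)
  moreover have "set (map g xs) \<subseteq> val_ring nu" using xs g by auto
  ultimately have "w \<notin> val_ideal nu" using fr unfolding residue_formally_real_def by blast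
  moreover have "w \<in> val_ring nu"
    unfolding w_def using g by (intro val_ring_add val_ring_one val_ring_sum val_ring_mult) auto
  ultimately have w: "w \<noteq> 0" "nu w = 0" using val_unit by blast+
  \<comment> \<open>Dividing by the unit \<open>u\<^sup>2\<close> turns the sum into \<open>1 + \<Sum> g\<^sup>2\<close>, a unit by formal reality.\<close>
  have "(\<Sum>x\<in>S. f x * f x) = f x0 * f x0 + (\<Sum>x\<in>S - {x0}. (u * u) * (g x * g x))"
    using u by (simp add: sum.remove[OF fin x0(1)] g_def)
  also have "\<dots> = (u * u) * w"
    unfolding w_def u_def by (simp add: distrib_left sum_distrib_left)
  finally have "(u * u) * w \<in> val_ideal nu" using in_ideal by simp
  moreover have "nu ((u * u) * w) = 0" using u w by (simp add: val_mult)
  ultimately show False using u w unfolding val_ideal_def by simp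
qed

end

section \<open>Matrices and matrix representations\<close>

lemma index_mult_mat_sum:
  assumes "A \<in> carrier_mat n m" "B \<in> carrier_mat m k" "i < n" "j < k"
  shows "(A * B) $$ (i,j) = (\<Sum>t<m. A $$ (i,t) * B $$ (t,j))"
  using assms by (simp add: scalar_prod_def atLeast0LessThan)

lemma index_mult_mat3_sum:
  assumes P: "P \<in> carrier_mat d n" and R: "R \<in> carrier_mat n n" and Q: "Q \<in> carrier_mat n d"
    and ij: "i < d" "j < d"
  shows "(P * R * Q) $$ (i,j) = (\<Sum>x<n. \<Sum>y<n. P $$ (i,x) * R $$ (x,y) * Q $$ (y,j))"
proof -
  have PR: "P * R \<in> carrier_mat d n" using P R by simp
  have "(P * R * Q) $$ (i,j) = (\<Sum>y<n. (P * R) $$ (i,y) * Q $$ (y,j))"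
    by (rule index_mult_mat_sum[OF PR Q ij])
  also have "\<dots> = (\<Sum>y<n. \<Sum>x<n. P $$ (i,x) * R $$ (x,y) * Q $$ (y,j))"
    by (intro sum.cong refl) (simp add: index_mult_mat_sum[OF P R ij(1)] sum_distrib_right)
  also have "\<dots> = (\<Sum>x<n. \<Sum>y<n. P $$ (i,x) * R $$ (x,y) * Q $$ (y,j))"
    by (rule sum.swap)
  finally show ?thesis .
qed

lemma sum_sum_delta:
  fixes f :: "nat \<Rightarrow> nat \<Rightarrow> 'a::comm_monoid_add"
  assumes "i < n" "j < m"
  shows "(\<Sum>x<n. \<Sum>y<m. if x = i \<and> y = j then f x y else 0) = f i j"
proof -
  have "(\<Sum>x<n. \<Sum>y<m. if x = i \<and> y = j then f x y else 0)
      = (\<Sum>x<n. if x = i then (\<Sum>y<m. if y = j then f x y else 0) else 0)"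
    by (intro sum.cong refl) auto
  then show ?thesis using assms by (simp add: sum.delta)
qed

lemma trace_conj:
  fixes P :: "'a::comm_ring_1 mat"
  assumes P: "P \<in> carrier_mat d n" and R: "R \<in> carrier_mat n n" and Q: "Q \<in> carrier_mat n d"
    and QP: "Q * P = 1\<^sub>m n"
  shows "(\<Sum>i<d. (P * R * Q) $$ (i,i)) = (\<Sum>x<n. R $$ (x,x))"
proof -
  have "(\<Sum>i<d. (P * R * Q) $$ (i,i)) = (\<Sum>i<d. \<Sum>x<n. \<Sum>y<n. P $$ (i,x) * R $$ (x,y) * Q $$ (y,i))"
    by (intro sum.cong refl) (simp add: index_mult_mat3_sum[OF P R Q])
  also have "\<dots> = (\<Sum>x<n. \<Sum>y<n. \<Sum>i<d. P $$ (i,x) * R $$ (x,y) * Q $$ (y,i))"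
    by (simp add: sum.swap[of _ "{..<d}"])
  also have "\<dots> = (\<Sum>x<n. \<Sum>y<n. R $$ (x,y) * (Q * P) $$ (y,x))"
  proof (intro sum.cong refl)
    fix x y assume xy: "x \<in> {..<n}" "y \<in> {..<n}"
    have "(Q * P) $$ (y,x) = (\<Sum>i<d. Q $$ (y,i) * P $$ (i,x))"
      by (rule index_mult_mat_sum[OF Q P]) (use xy in auto)
    then show "(\<Sum>i<d. P $$ (i,x) * R $$ (x,y) * Q $$ (y,i)) = R $$ (x,y) * (Q * P) $$ (y,x)"
      by (simp add: sum_distrib_left algebra_simps)
  qed
  also have "\<dots> = (\<Sum>x<n. \<Sum>y<n. if y = x then R $$ (x,x) else 0)"
    unfolding QP by (intro sum.cong refl) auto
  also have "\<dots> = (\<Sum>x<n. R $$ (x,x))" by (simp add: sum.delta)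
  finally show ?thesis .
qed

definition matrix_unit :: "nat \<Rightarrow> nat \<Rightarrow> nat \<Rightarrow> 'a::zero_neq_one mat" where
  "matrix_unit n x y = mat n n (\<lambda>(i,j). if i = x \<and> j = y then 1 else 0)"

lemma matrix_unit_carrier[simp]: "matrix_unit n x y \<in> carrier_mat n n"
  unfolding matrix_unit_def by simp

lemma matrix_unit_dims[simp]: "dim_row (matrix_unit n x y) = n" "dim_col (matrix_unit n x y) = n"
  unfolding matrix_unit_def by simp_all

lemma index_matrix_unit[simp]:
  "i < n \<Longrightarrow> j < n \<Longrightarrow> matrix_unit n x y $$ (i,j) = (if i = x \<and> j = y then 1 else 0)"
  unfolding matrix_unit_def by simp

lemma index_mult_matrix_unit_right:
  assumes A: "A \<in> carrier_mat n n" and "y < n" "a < n" "b < n"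
  shows "(A * matrix_unit n y x) $$ (a,b) = (if b = x then A $$ (a,y) else (0::'a::comm_ring_1))"
proof -
  have "(A * matrix_unit n y x) $$ (a,b) = (\<Sum>t<n. A $$ (a,t) * matrix_unit n y x $$ (t,b))"
    by (rule index_mult_mat_sum) (use assms in auto)
  also have "\<dots> = (\<Sum>t<n. if t = y then (if b = x then A $$ (a,y) else 0) else 0)"
    by (intro sum.cong refl) (use assms in auto)
  finally show ?thesis using assms by (simp add: sum.delta)
qed

lemma index_mult_matrix_unit_left:
  assumes A: "A \<in> carrier_mat n n" and "x < n" "a < n" "b < n"
  shows "(matrix_unit n y x * A) $$ (a,b) = (if a = y then A $$ (x,b) else (0::'a::comm_ring_1))"
proof -
  have "(matrix_unit n y x * A) $$ (a,b) = (\<Sum>t<n. matrix_unit n y x $$ (a,t) * A $$ (t,b))"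
    by (rule index_mult_mat_sum) (use assms in auto)
  also have "\<dots> = (\<Sum>t<n. if t = x then (if a = y then A $$ (x,b) else 0) else 0)"
    by (intro sum.cong refl) (use assms in auto)
  finally show ?thesis using assms by (simp add: sum.delta)
qed

lemma matrix_unit_mult:
  assumes "x < n" "y < n" "z < n" "w < n"
  shows "matrix_unit n x y * matrix_unit n z w
    = (if y = z then matrix_unit n x w else (0\<^sub>m n n :: 'a::comm_ring_1 mat))"
proof (rule eq_matI)
  fix i j assume "i < dim_row (if y = z then matrix_unit n x w else (0\<^sub>m n n :: 'a mat))"
    "j < dim_col (if y = z then matrix_unit n x w else (0\<^sub>m n n :: 'a mat))"
  then have ij: "i < n" "j < n" by (auto split: if_splits)
  have "(matrix_unit n x y * matrix_unit n z w) $$ (i,j)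
      = (\<Sum>t<n. (matrix_unit n x y :: 'a mat) $$ (i,t) * matrix_unit n z w $$ (t,j))"
    by (rule index_mult_mat_sum) (use ij in auto)
  also have "\<dots> = (\<Sum>t<n. if t = y then (if i = x \<and> y = z \<and> j = w then 1 else 0) else (0::'a))"
    by (intro sum.cong refl) (use ij in auto)
  also have "\<dots> = (if i = x \<and> y = z \<and> j = w then 1 else 0)" using assms by (simp add: sum.delta)
  also have "\<dots> = (if y = z then matrix_unit n x w else 0\<^sub>m n n) $$ (i,j)" using ij by auto
  finally show "(matrix_unit n x y * matrix_unit n z w :: 'a mat) $$ (i,j)
     = (if y = z then matrix_unit n x w else 0\<^sub>m n n) $$ (i,j)" .
qed auto

context
  fixes smul :: "'k::field \<Rightarrow> 'h::ring_1 \<Rightarrow> 'h" and r :: "'h \<Rightarrow> 'k mat" and n :: nat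
  assumes rep: "matrix_rep smul r n"
begin

lemma rep_carrier[simp]: "r h \<in> carrier_mat n n"
  using rep unfolding matrix_rep_def by blast

lemma rep_dims[simp]: "dim_row (r h) = n" "dim_col (r h) = n"
  using carrier_matD[OF rep_carrier[of h]] by auto

lemma rep_mult: "r (a * b) = r a * r b"
  and rep_add: "r (a + b) = r a + r b"
  and rep_smul: "r (smul c a) = c \<cdot>\<^sub>m r a"
  and rep_one: "r 1 = 1\<^sub>m n"
  using rep unfolding matrix_rep_def by blast+

lemma rep_mult_entry:
  "i < n \<Longrightarrow> j < n \<Longrightarrow> r (a * b) $$ (i,j) = (\<Sum>t<n. r a $$ (i,t) * r b $$ (t,j))"
  unfolding rep_mult by (rule index_mult_mat_sum) auto

lemma rep_add_entry: "i < n \<Longrightarrow> j < n \<Longrightarrow> r (a + b) $$ (i,j) = r a $$ (i,j) + r b $$ (i,j)"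
  unfolding rep_add by simp

lemma rep_smul_entry: "i < n \<Longrightarrow> j < n \<Longrightarrow> r (smul c a) $$ (i,j) = c * r a $$ (i,j)"
  unfolding rep_smul by simp

lemma rep_zero_entry: "i < n \<Longrightarrow> j < n \<Longrightarrow> r 0 $$ (i,j) = 0"
  using rep_add_entry[of i j 0 0] by (metis add_cancel_right_right)

lemma rep_zero: "r 0 = 0\<^sub>m n n"
  by (rule eq_matI) (auto simp: rep_zero_entry)

lemma rep_sum_entry:
  "finite S \<Longrightarrow> i < n \<Longrightarrow> j < n \<Longrightarrow> r (sum f S) $$ (i,j) = (\<Sum>x\<in>S. r (f x) $$ (i,j))"
  by (induction S rule: finite_induct) (auto simp: rep_zero_entry rep_add_entry)

end

lemma irreducible_rep_commuting_image:
  assumes irr: "irreducible_rep smul rho d" and M: "M \<in> carrier_mat d d"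
    and comm: "\<And>h. M * rho h = rho h * M"
  shows "{M *\<^sub>v v | v. v \<in> carrier_vec d} = {0\<^sub>v d} \<or> {M *\<^sub>v v | v. v \<in> carrier_vec d} = carrier_vec d"
proof -
  have rep: "matrix_rep smul rho d" using irr unfolding irreducible_rep_def by blast
  define W where "W = {M *\<^sub>v v | v. v \<in> carrier_vec d}"
  have W0: "0\<^sub>v d \<in> W"
  proof -
    have "M *\<^sub>v 0\<^sub>v d = 0\<^sub>v d" using M by (intro eq_vecI) auto
    then show ?thesis unfolding W_def by (intro CollectI exI[of _ "0\<^sub>v d"]) auto
  qed
  have Wadd: "\<forall>v\<in>W. \<forall>w\<in>W. v + w \<in> W"
  proof (intro ballI)
    fix v w assume "v \<in> W" "w \<in> W"
    then obtain a b where "v = M *\<^sub>v a" "a \<in> carrier_vec d" "w = M *\<^sub>v b" "b \<in> carrier_vec d"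
      unfolding W_def by blast
    then have "v + w = M *\<^sub>v (a + b)" "a + b \<in> carrier_vec d"
      using M by (simp_all add: mult_add_distrib_mat_vec)
    then show "v + w \<in> W" unfolding W_def by blast
  qed
  have Wscale: "\<forall>c. \<forall>v\<in>W. c \<cdot>\<^sub>v v \<in> W"
  proof (intro allI ballI)
    fix c v assume "v \<in> W"
    then obtain a where "v = M *\<^sub>v a" "a \<in> carrier_vec d" unfolding W_def by blast
    then have "c \<cdot>\<^sub>v v = M *\<^sub>v (c \<cdot>\<^sub>v a)" "c \<cdot>\<^sub>v a \<in> carrier_vec d"
      using M by (simp_all add: mult_mat_vec)
    then show "c \<cdot>\<^sub>v v \<in> W" unfolding W_def by blast
  qed
  have Winvariant: "\<forall>h. \<forall>v\<in>W. rho h *\<^sub>v v \<in> W"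
  proof (intro allI ballI)
    fix h v assume "v \<in> W"
    then obtain a where a: "v = M *\<^sub>v a" "a \<in> carrier_vec d" unfolding W_def by blast
    have rh: "rho h \<in> carrier_mat d d" using rep_carrier[OF rep] .
    have "rho h *\<^sub>v v = (rho h * M) *\<^sub>v a" using a M rh by simp
    also have "\<dots> = (M * rho h) *\<^sub>v a" using comm by simp
    also have "\<dots> = M *\<^sub>v (rho h *\<^sub>v a)" using a M rh by simp
    finally show "rho h *\<^sub>v v \<in> W" unfolding W_def using a rh by auto
  qed
  have "W \<subseteq> carrier_vec d" unfolding W_def using M by auto
  then show ?thesis
    using irr W0 Wadd Wscale Winvariant unfolding W_def[symmetric] irreducible_rep_def by blast
qed

lemma irreducible_rep_idempotent_cases:
  assumes irr: "irreducible_rep smul rho d" and M: "M \<in> carrier_mat d d"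
    and idem: "M * M = M" and comm: "\<And>h. M * rho h = rho h * M"
  shows "M = 0\<^sub>m d d \<or> M = 1\<^sub>m d"
  using irreducible_rep_commuting_image[OF irr M comm]
proof
  assume W: "{M *\<^sub>v v | v. v \<in> carrier_vec d} = {0\<^sub>v d}"
  have "M $$ (i,j) = 0" if "i < d" "j < d" for i j
  proof -
    have "M *\<^sub>v unit_vec d j \<in> {0\<^sub>v d}" unfolding W[symmetric] by auto
    then have "(M *\<^sub>v unit_vec d j) $ i = 0" using that by simp
    then show ?thesis using M that by simp
  qed
  then show ?thesis using M by (auto intro!: eq_matI)
next
  assume W: "{M *\<^sub>v v | v. v \<in> carrier_vec d} = carrier_vec d"
  have "M $$ (i,j) = 1\<^sub>m d $$ (i,j)" if ij: "i < d" "j < d" for i j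
  proof -
    obtain a where a: "unit_vec d j = M *\<^sub>v a" "a \<in> carrier_vec d"
      using W unit_vec_carrier[of d j] by blast
    have "M *\<^sub>v unit_vec d j = (M * M) *\<^sub>v a" using a M by simp
    then have "M *\<^sub>v unit_vec d j = unit_vec d j" using idem a by simp
    then have "(M *\<^sub>v unit_vec d j) $ i = unit_vec d j $ i" by simp
    then show ?thesis using M ij by simp
  qed
  then show ?thesis using M by (auto intro!: eq_matI)
qed

lemma irreducible_rep_right_inverse:
  assumes irr: "irreducible_rep smul rho d"
    and P: "P \<in> carrier_mat d n" and Q: "Q \<in> carrier_mat n d" and QP: "Q * P = 1\<^sub>m n" and n: "0 < n"
    and comm: "\<And>h. P * Q * rho h = rho h * (P * Q)"
  shows "P * Q = 1\<^sub>m d"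
proof -
  have "P * Q * (P * Q) = P * (Q * (P * Q))" by (rule assoc_mult_mat[OF P Q mult_carrier_mat[OF P Q]])
  also have "Q * (P * Q) = (Q * P) * Q" by (rule assoc_mult_mat[OF Q P Q, symmetric])
  finally have "P * Q * (P * Q) = P * Q" using QP Q by simp
  then have "P * Q = 0\<^sub>m d d \<or> P * Q = 1\<^sub>m d"
    using P Q comm by (intro irreducible_rep_idempotent_cases[OF irr]) auto
  moreover have "P * Q \<noteq> 0\<^sub>m d d"
  proof
    assume "P * Q = 0\<^sub>m d d"
    then have "Q * (P * Q) * P = 0\<^sub>m n n" using P Q by simp
    moreover have "Q * (P * Q) * P = 1\<^sub>m n"
      using P Q QP by (simp add: assoc_mult_mat[of Q n d P n Q d, symmetric])
    ultimately have "(1\<^sub>m n :: 'a mat) $$ (0,0) = 0\<^sub>m n n $$ (0,0)" by simp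
    then show False using n by simp
  qed
  ultimately show ?thesis by simp
qed

section \<open>Homomorphisms out of a full matrix algebra\<close>

locale matrix_algebra_hom =
  fixes sig :: "'k::field mat \<Rightarrow> 'k mat" and n d :: nat
  assumes sig_carrier: "\<And>A. sig A \<in> carrier_mat d d"
    and sig_mult: "\<And>A B. A \<in> carrier_mat n n \<Longrightarrow> B \<in> carrier_mat n n \<Longrightarrow> sig (A * B) = sig A * sig B"
    and sig_linear: "\<And>A i j. A \<in> carrier_mat n n \<Longrightarrow> i < d \<Longrightarrow> j < d \<Longrightarrow>
      sig A $$ (i,j) = (\<Sum>x<n. \<Sum>y<n. A $$ (x,y) * sig (matrix_unit n x y) $$ (i,j))"
begin

lemma sig_zero: "sig (0\<^sub>m n n) = 0\<^sub>m d d"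
  by (rule eq_matI) (use sig_carrier[of "0\<^sub>m n n"] in \<open>auto simp: sig_linear\<close>)

lemma sig_matrix_unit_mult:
  assumes "x < n" "y < n" "z < n" "w < n"
  shows "sig (matrix_unit n x y) * sig (matrix_unit n z w)
    = (if y = z then sig (matrix_unit n x w) else 0\<^sub>m d d)"
  unfolding sig_mult[OF matrix_unit_carrier matrix_unit_carrier, symmetric]
    matrix_unit_mult[OF assms] using sig_zero by simp

definition col_embedding :: "nat \<Rightarrow> nat \<Rightarrow> 'k mat" where
  "col_embedding x0 j0 = mat d n (\<lambda>(i,x). sig (matrix_unit n x x0) $$ (i,j0))"

definition row_projection :: "nat \<Rightarrow> nat \<Rightarrow> 'k \<Rightarrow> 'k mat" where
  "row_projection x0 i1 c = mat n d (\<lambda>(x,i). sig (matrix_unit n x0 x) $$ (i1,i) / c)"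

lemma col_embedding_dims[simp]: "dim_row (col_embedding x0 j0) = d" "dim_col (col_embedding x0 j0) = n"
  unfolding col_embedding_def by simp_all

lemma row_projection_dims[simp]: "dim_row (row_projection x0 i1 c) = n" "dim_col (row_projection x0 i1 c) = d"
  unfolding row_projection_def by simp_all

lemma col_embedding_carrier: "col_embedding x0 j0 \<in> carrier_mat d n"
  unfolding carrier_mat_def by simp

lemma row_projection_carrier: "row_projection x0 i1 c \<in> carrier_mat n d"
  unfolding carrier_mat_def by simp

lemma sig_mult_col_embedding:
  assumes x0: "x0 < n" and j0: "j0 < d" and A: "A \<in> carrier_mat n n"
  shows "sig A * col_embedding x0 j0 = col_embedding x0 j0 * A"
proof (rule eq_matI)
  let ?P = "col_embedding x0 j0"
  fix i y assume "i < dim_row (?P * A)" "y < dim_col (?P * A)"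
  then have iy: "i < d" "y < n" using col_embedding_carrier A by simp_all
  have "(sig A * ?P) $$ (i,y) = (sig A * sig (matrix_unit n y x0)) $$ (i,j0)"
    unfolding index_mult_mat_sum[OF sig_carrier col_embedding_carrier iy]
      index_mult_mat_sum[OF sig_carrier sig_carrier iy(1) j0]
    by (intro sum.cong refl) (use iy in \<open>auto simp: col_embedding_def\<close>)
  also have "\<dots> = sig (A * matrix_unit n y x0) $$ (i,j0)" by (simp add: sig_mult[OF A])
  also have "\<dots> = (\<Sum>a<n. \<Sum>b<n. (A * matrix_unit n y x0) $$ (a,b) * sig (matrix_unit n a b) $$ (i,j0))"
    by (rule sig_linear) (use A iy j0 in auto)
  also have "\<dots> = (\<Sum>a<n. \<Sum>b<n. if b = x0 then A $$ (a,y) * sig (matrix_unit n a x0) $$ (i,j0) else 0)"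
    by (intro sum.cong refl)
      (use A iy in \<open>auto simp: index_mult_matrix_unit_right simp del: index_mult_mat\<close>)
  also have "\<dots> = (\<Sum>a<n. ?P $$ (i,a) * A $$ (a,y))"
    using x0 iy by (simp add: sum.delta col_embedding_def mult.commute)
  also have "\<dots> = (?P * A) $$ (i,y)" by (rule index_mult_mat_sum[symmetric, OF col_embedding_carrier A iy])
  finally show "(sig A * ?P) $$ (i,y) = (?P * A) $$ (i,y)" .
qed (use col_embedding_carrier A sig_carrier[of A] in auto)

lemma row_projection_mult_sig:
  assumes x0: "x0 < n" and i1: "i1 < d" and A: "A \<in> carrier_mat n n"
  shows "row_projection x0 i1 c * sig A = A * row_projection x0 i1 c"
proof (rule eq_matI)
  let ?Q = "row_projection x0 i1 c"
  fix x i assume "x < dim_row (A * ?Q)" "i < dim_col (A * ?Q)"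
  then have xi: "x < n" "i < d" using row_projection_carrier A by simp_all
  have "(?Q * sig A) $$ (x,i) = (sig (matrix_unit n x0 x) * sig A) $$ (i1,i) / c"
    unfolding index_mult_mat_sum[OF row_projection_carrier sig_carrier xi]
      index_mult_mat_sum[OF sig_carrier sig_carrier i1 xi(2)] sum_divide_distrib
    by (intro sum.cong refl) (use xi in \<open>auto simp: row_projection_def\<close>)
  also have "sig (matrix_unit n x0 x) * sig A = sig (matrix_unit n x0 x * A)"
    by (simp add: sig_mult[OF _ A])
  also have "sig (matrix_unit n x0 x * A) $$ (i1,i)
      = (\<Sum>a<n. \<Sum>b<n. (matrix_unit n x0 x * A) $$ (a,b) * sig (matrix_unit n a b) $$ (i1,i))"
    by (rule sig_linear) (use A xi i1 in auto)
  also have "\<dots> = (\<Sum>a<n. if a = x0 then (\<Sum>b<n. A $$ (x,b) * sig (matrix_unit n x0 b) $$ (i1,i)) else 0)"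
    by (intro sum.cong refl)
      (use A xi in \<open>auto simp: index_mult_matrix_unit_left simp del: index_mult_mat\<close>)
  also have "\<dots> / c = (\<Sum>b<n. A $$ (x,b) * ?Q $$ (b,i))"
    using x0 xi by (simp add: sum.delta sum_divide_distrib row_projection_def)
  also have "\<dots> = (A * ?Q) $$ (x,i)" by (rule index_mult_mat_sum[symmetric, OF A row_projection_carrier xi])
  finally show "(?Q * sig A) $$ (x,i) = (A * ?Q) $$ (x,i)" .
qed (use row_projection_carrier A sig_carrier[of A] in auto)

lemma row_projection_mult_col_embedding:
  assumes x0: "x0 < n" and i1: "i1 < d" and j0: "j0 < d"
    and c: "c = sig (matrix_unit n x0 x0) $$ (i1,j0)" "c \<noteq> 0"
  shows "row_projection x0 i1 c * col_embedding x0 j0 = 1\<^sub>m n"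
proof (rule eq_matI)
  fix x y assume "x < dim_row (1\<^sub>m n :: 'k mat)" "y < dim_col (1\<^sub>m n :: 'k mat)"
  then have xy: "x < n" "y < n" by simp_all
  have "(row_projection x0 i1 c * col_embedding x0 j0) $$ (x,y)
      = (sig (matrix_unit n x0 x) * sig (matrix_unit n y x0)) $$ (i1,j0) / c"
    unfolding index_mult_mat_sum[OF row_projection_carrier col_embedding_carrier xy]
      index_mult_mat_sum[OF sig_carrier sig_carrier i1 j0] sum_divide_distrib
    by (intro sum.cong refl) (use xy in \<open>auto simp: row_projection_def col_embedding_def\<close>)
  also have "\<dots> = 1\<^sub>m n $$ (x,y)"
    unfolding sig_matrix_unit_mult[OF x0 xy x0] using c xy i1 j0 by simp
  finally show "(row_projection x0 i1 c * col_embedding x0 j0) $$ (x,y) = 1\<^sub>m n $$ (x,y)" .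
qed (use row_projection_carrier col_embedding_carrier in auto)

text \<open>Since \<open>\<sigma>(1) = \<Sum>\<^sub>x \<sigma>(E\<^sub>x\<^sub>x) \<noteq> 0\<close>, some \<open>\<sigma>(E\<^sub>x\<^sub>0\<^sub>x\<^sub>0)\<close> has a nonzero entry \<open>c\<close> at \<open>(i\<^sub>1, j\<^sub>0)\<close>;
  these choices give the intertwiners.\<close>

lemma unital_hom_intertwiners:
  assumes sig_one: "sig (1\<^sub>m n) = 1\<^sub>m d" and d0: "0 < d"
  obtains P Q where "P \<in> carrier_mat d n" "Q \<in> carrier_mat n d" "Q * P = 1\<^sub>m n"
    "\<And>A. A \<in> carrier_mat n n \<Longrightarrow> sig A * P = P * A"
    "\<And>A. A \<in> carrier_mat n n \<Longrightarrow> Q * sig A = A * Q"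
proof -
  have "\<exists>x0<n. sig (matrix_unit n x0 x0) \<noteq> 0\<^sub>m d d"
  proof (rule ccontr)
    assume "\<not> ?thesis"
    then have zero: "\<And>x. x < n \<Longrightarrow> sig (matrix_unit n x x) = 0\<^sub>m d d" by blast
    have "sig (1\<^sub>m n) $$ (0,0) = (\<Sum>x<n. \<Sum>y<n. 1\<^sub>m n $$ (x,y) * sig (matrix_unit n x y) $$ (0,0))"
      by (rule sig_linear) (use d0 in auto)
    also have "\<dots> = 0" by (intro sum.neutral ballI) (use zero d0 in auto)
    finally show False using sig_one d0 by simp
  qed
  then obtain x0 where x0: "x0 < n" "sig (matrix_unit n x0 x0) \<noteq> 0\<^sub>m d d" by blast
  have "\<exists>i1<d. \<exists>j0<d. sig (matrix_unit n x0 x0) $$ (i1,j0) \<noteq> 0"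
  proof (rule ccontr)
    assume "\<not> ?thesis"
    then have "sig (matrix_unit n x0 x0) = 0\<^sub>m d d"
      by (intro eq_matI) (use sig_carrier[of "matrix_unit n x0 x0"] in auto)
    with x0 show False by simp
  qed
  then obtain i1 j0 where ij: "i1 < d" "j0 < d" "sig (matrix_unit n x0 x0) $$ (i1,j0) \<noteq> 0" by blast
  define c where "c = sig (matrix_unit n x0 x0) $$ (i1,j0)"
  show thesis
  proof (rule that[of "col_embedding x0 j0" "row_projection x0 i1 c"])
    show "row_projection x0 i1 c * col_embedding x0 j0 = 1\<^sub>m n"
      by (rule row_projection_mult_col_embedding[OF x0(1) ij(1,2) c_def]) (use ij c_def in simp)
  qed (auto intro: col_embedding_carrier row_projection_carrier sig_mult_col_embedding[OF x0(1) ij(2)]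
      row_projection_mult_sig[OF x0(1) ij(1)])
qed

end

section \<open>Wedderburn decomposition\<close>

locale wedderburn =
  fixes smul :: "'k::field \<Rightarrow> 'h::ring_1 \<Rightarrow> 'h" and rs :: "(('h \<Rightarrow> 'k mat) \<times> nat) list"
  assumes alg: "K_algebra smul"
    and irr: "\<forall>(r, n) \<in> set rs. irreducible_rep smul r n"
    and bij: "bij_betw (\<lambda>h. map (\<lambda>(r, n). r h) rs) UNIV
          {Ms. length Ms = length rs \<and>
               (\<forall>i < length rs. Ms ! i \<in> carrier_mat (snd (rs ! i)) (snd (rs ! i)))}"
begin

abbreviation N :: nat where "N \<equiv> length rs"
definition comp :: "nat \<Rightarrow> 'h \<Rightarrow> 'k mat" where "comp p = fst (rs ! p)"
definition deg :: "nat \<Rightarrow> nat" where "deg p = snd (rs ! p)"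

lemma comp_irreducible: "p < N \<Longrightarrow> irreducible_rep smul (comp p) (deg p)"
proof -
  assume p: "p < N"
  then have "rs ! p \<in> set rs" by simp
  from bspec[OF irr this] have "case rs ! p of (r, n) \<Rightarrow> irreducible_rep smul r n" .
  then have "irreducible_rep smul (fst (rs ! p)) (snd (rs ! p))" by (cases "rs ! p") simp
  then show ?thesis unfolding comp_def deg_def .
qed

lemma comp_rep: assumes "p < N" shows "matrix_rep smul (comp p) (deg p)"
  using comp_irreducible[OF assms] unfolding irreducible_rep_def by blast

lemma deg_pos: assumes "p < N" shows "0 < deg p"
  using comp_irreducible[OF assms] unfolding irreducible_rep_def by blast

lemma comp_carrier[simp]: "p < N \<Longrightarrow> comp p h \<in> carrier_mat (deg p) (deg p)"
  using rep_carrier[OF comp_rep] .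

lemma components_eqI:
  assumes "\<And>q i j. q < N \<Longrightarrow> i < deg q \<Longrightarrow> j < deg q \<Longrightarrow> comp q x $$ (i,j) = comp q y $$ (i,j)"
  shows "x = y"
proof -
  have "map (\<lambda>(r, n). r x) rs = map (\<lambda>(r, n). r y) rs"
  proof (rule nth_equalityI)
    fix p assume p: "p < length (map (\<lambda>(r, n). r x) rs)"
    then have p': "p < N" by simp
    have "comp p x = comp p y"
      by (intro eq_matI) (use assms[OF p'] carrier_matD[OF comp_carrier[OF p']] in auto)
    then show "map (\<lambda>(r, n). r x) rs ! p = map (\<lambda>(r, n). r y) rs ! p"
      using p' unfolding comp_def by (cases "rs ! p") auto
  qed simp
  then show ?thesis using bij unfolding bij_betw_def inj_on_def by blast
qed

lemma components_surj:
  assumes "\<And>q. q < N \<Longrightarrow> M q \<in> carrier_mat (deg q) (deg q)"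
  shows "\<exists>h. \<forall>q<N. comp q h = M q"
proof -
  have "map M [0..<N] \<in> {Ms. length Ms = length rs \<and>
               (\<forall>i < length rs. Ms ! i \<in> carrier_mat (snd (rs ! i)) (snd (rs ! i)))}"
    using assms unfolding deg_def by auto
  then obtain h where h: "map (\<lambda>(r, n). r h) rs = map M [0..<N]"
    using bij unfolding bij_betw_def by (metis (no_types, lifting) imageE)
  have "comp q h = M q" if q: "q < N" for q
  proof -
    have "map (\<lambda>(r, n). r h) rs ! q = map M [0..<N] ! q" using h by simp
    then show ?thesis using q unfolding comp_def by (cases "rs ! q") auto
  qed
  then show ?thesis by blast
qed

definition block :: "nat \<Rightarrow> 'k mat \<Rightarrow> 'h" where
  "block p A = (SOME h. \<forall>q<N. comp q h = (if q = p then A else 0\<^sub>m (deg q) (deg q)))"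

lemma comp_block:
  assumes A: "A \<in> carrier_mat (deg p) (deg p)" and q: "q < N"
  shows "comp q (block p A) = (if q = p then A else 0\<^sub>m (deg q) (deg q))"
proof -
  have "\<exists>h. \<forall>q<N. comp q h = (if q = p then A else 0\<^sub>m (deg q) (deg q))"
    by (rule components_surj) (use A in auto)
  from someI_ex[OF this] q show ?thesis unfolding block_def by blast
qed

lemma index_comp_block:
  assumes A: "A \<in> carrier_mat (deg p) (deg p)" and q: "q < N" and ij: "i < deg q" "j < deg q"
  shows "comp q (block p A) $$ (i,j) = (if q = p then A $$ (i,j) else 0)"
  using comp_block[OF A q] ij by simp

definition idem :: "nat \<Rightarrow> 'h" where "idem p = block p (1\<^sub>m (deg p))"

lemma block_mult:
  assumes A: "A \<in> carrier_mat (deg p) (deg p)" and B: "B \<in> carrier_mat (deg p) (deg p)"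
  shows "block p A * block p B = block p (A * B)"
proof (rule components_eqI)
  fix q i j assume q: "q < N" and ij: "i < deg q" "j < deg q"
  have AB: "A * B \<in> carrier_mat (deg p) (deg p)" using A B by simp
  show "comp q (block p A * block p B) $$ (i, j) = comp q (block p (A * B)) $$ (i, j)"
    unfolding rep_mult[OF comp_rep[OF q]] comp_block[OF A q] comp_block[OF B q] comp_block[OF AB q]
    using A B by (cases "q = p") simp_all
qed

lemma idem_central: "p < N \<Longrightarrow> idem p * h = h * idem p"
proof (rule components_eqI)
  fix q i j assume p: "p < N" and q: "q < N" and ij: "i < deg q" "j < deg q"
  show "comp q (idem p * h) $$ (i, j) = comp q (h * idem p) $$ (i, j)"
    unfolding idem_def rep_mult[OF comp_rep[OF q]] comp_block[OF one_carrier_mat q]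
    using comp_carrier[OF q, of h] by (cases "q = p") simp_all
qed

lemma idem_idem: "idem p * idem p = idem p"
  unfolding idem_def by (simp add: block_mult)

lemma mult_idem: "p < N \<Longrightarrow> h * idem p = block p (comp p h)"
proof (rule components_eqI)
  fix q i j assume p: "p < N" and q: "q < N" and ij: "i < deg q" "j < deg q"
  show "comp q (h * idem p) $$ (i, j) = comp q (block p (comp p h)) $$ (i, j)"
    unfolding idem_def rep_mult[OF comp_rep[OF q]] comp_block[OF one_carrier_mat q] comp_block[OF comp_carrier[OF p] q]
    using comp_carrier[OF q, of h] by (cases "q = p") simp_all
qed

lemma one_eq_sum_idem: "1 = (\<Sum>p<N. idem p)"
proof (rule components_eqI)
  fix q i j assume q: "q < N" and ij: "i < deg q" "j < deg q"
  have "comp q (\<Sum>p<N. idem p) $$ (i, j) = (\<Sum>p<N. comp q (idem p) $$ (i,j))"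
    by (rule rep_sum_entry[OF comp_rep[OF q]]) (use ij in auto)
  also have "\<dots> = (\<Sum>p<N. if p = q then 1\<^sub>m (deg q) $$ (i,j) else 0)"
    unfolding idem_def by (intro sum.cong refl) (use ij q in \<open>auto simp: index_comp_block\<close>)
  also have "\<dots> = 1\<^sub>m (deg q) $$ (i,j)" using q by simp
  finally show "comp q 1 $$ (i, j) = comp q (\<Sum>p<N. idem p) $$ (i, j)"
    unfolding rep_one[OF comp_rep[OF q]] by simp
qed

lemma block_expand:
  assumes A: "A \<in> carrier_mat (deg p) (deg p)"
  shows "block p A = (\<Sum>x<deg p. \<Sum>y<deg p. smul (A $$ (x,y)) (block p (matrix_unit (deg p) x y)))"
proof (rule components_eqI)
  fix q i j assume q: "q < N" and ij: "i < deg q" "j < deg q"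
  have "comp q (\<Sum>x<deg p. \<Sum>y<deg p. smul (A $$ (x,y)) (block p (matrix_unit (deg p) x y))) $$ (i,j)
     = (\<Sum>x<deg p. \<Sum>y<deg p. A $$ (x,y) * comp q (block p (matrix_unit (deg p) x y)) $$ (i,j))"
    using ij by (simp add: rep_sum_entry[OF comp_rep[OF q]] rep_smul_entry[OF comp_rep[OF q]])
  also have "\<dots> = (\<Sum>x<deg p. \<Sum>y<deg p. if q = p then (if x = i \<and> y = j then A $$ (x,y) else 0) else 0)"
    by (intro sum.cong refl) (use ij q in \<open>auto simp: index_comp_block\<close>)
  also have "\<dots> = comp q (block p A) $$ (i,j)"
    using ij q A by (auto simp: index_comp_block sum_sum_delta)
  finally show "comp q (block p A) $$ (i, j) =
     comp q (\<Sum>x<deg p. \<Sum>y<deg p. smul (A $$ (x, y)) (block p (matrix_unit (deg p) x y))) $$ (i, j)" by simp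
qed

lemma sum_blocks: "h = (\<Sum>p<N. block p (comp p h))"
proof (rule components_eqI)
  fix q i j assume q: "q < N" and ij: "i < deg q" "j < deg q"
  have "comp q (\<Sum>p<N. block p (comp p h)) $$ (i, j) = (\<Sum>p<N. comp q (block p (comp p h)) $$ (i,j))"
    by (rule rep_sum_entry[OF comp_rep[OF q]]) (use ij in auto)
  also have "\<dots> = (\<Sum>p<N. if p = q then comp q h $$ (i,j) else 0)"
    by (intro sum.cong refl) (use ij q in \<open>auto simp: index_comp_block\<close>)
  also have "\<dots> = comp q h $$ (i,j)" using q by simp
  finally show "comp q h $$ (i, j) = comp q (\<Sum>p<N. block p (comp p h)) $$ (i, j)" by simp
qed

lemma irreducible_rep_idem_one:
  assumes irr: "irreducible_rep smul rho d"
  obtains p where "p < N" "rho (idem p) = 1\<^sub>m d"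
proof -
  have rep: "matrix_rep smul rho d" and d0: "0 < d" using irr unfolding irreducible_rep_def by blast+
  have idem_cases: "rho (idem p) = 0\<^sub>m d d \<or> rho (idem p) = 1\<^sub>m d" if p: "p < N" for p
  proof (rule irreducible_rep_idempotent_cases[OF irr rep_carrier[OF rep]])
    show "rho (idem p) * rho (idem p) = rho (idem p)" using idem_idem rep_mult[OF rep] by metis
    show "rho (idem p) * rho h = rho h * rho (idem p)" for h
      using idem_central[OF p] rep_mult[OF rep] by metis
  qed
  have "\<exists>p<N. rho (idem p) = 1\<^sub>m d"
  proof (rule ccontr)
    assume "\<not> ?thesis"
    then have zero: "\<And>p. p < N \<Longrightarrow> rho (idem p) = 0\<^sub>m d d" using idem_cases by blast
    have "rho 1 $$ (0,0) = (\<Sum>p<N. rho (idem p) $$ (0,0))"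
      unfolding one_eq_sum_idem by (rule rep_sum_entry[OF rep]) (use d0 in auto)
    also have "\<dots> = 0" using zero d0 by simp
    finally show False using rep_one[OF rep] d0 by simp
  qed
  then show thesis using that by blast
qed

text \<open>An irreducible \<open>\<rho>\<close> is supported on a single block \<open>p\<close>, where it restricts to a unital
  homomorphism \<open>\<sigma>\<close> on the full matrix algebra; the intertwiners of \<open>\<sigma>\<close> are inverse to each
  other by irreducibility.\<close>

lemma irreducible_rep_conj_comp:
  assumes irr: "irreducible_rep smul rho d"
  obtains p P Q where "p < N" "P \<in> carrier_mat d (deg p)" "Q \<in> carrier_mat (deg p) d"
    "P * Q = 1\<^sub>m d" "Q * P = 1\<^sub>m (deg p)" "\<And>h. rho h = P * comp p h * Q"
proof -
  have rep: "matrix_rep smul rho d" and d0: "0 < d" using irr unfolding irreducible_rep_def by blast+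
  have rc: "\<And>h. rho h \<in> carrier_mat d d" using rep_carrier[OF rep] .
  obtain p where p: "p < N" and idem_p: "rho (idem p) = 1\<^sub>m d"
    using irreducible_rep_idem_one[OF irr] by blast
  define sig where "sig A = rho (block p A)" for A
  interpret matrix_algebra_hom sig "deg p" d
  proof
    show "sig A \<in> carrier_mat d d" for A unfolding sig_def by (rule rc)
    show "sig (A * B) = sig A * sig B"
      if "A \<in> carrier_mat (deg p) (deg p)" "B \<in> carrier_mat (deg p) (deg p)" for A B
      unfolding sig_def using block_mult[of A p B] that rep_mult[OF rep] by metis
    show "sig A $$ (i,j) = (\<Sum>x<deg p. \<Sum>y<deg p. A $$ (x,y) * sig (matrix_unit (deg p) x y) $$ (i,j))"
      if A: "A \<in> carrier_mat (deg p) (deg p)" and ij: "i < d" "j < d" for A i j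
      using ij block_expand[OF A]
      by (simp add: sig_def rep_sum_entry[OF rep] rep_smul_entry[OF rep])
  qed
  have sig_one: "sig (1\<^sub>m (deg p)) = 1\<^sub>m d" using idem_p by (simp add: sig_def idem_def)
  obtain P Q where P: "P \<in> carrier_mat d (deg p)" and Q: "Q \<in> carrier_mat (deg p) d"
    and QP: "Q * P = 1\<^sub>m (deg p)"
    and sigP: "\<And>A. A \<in> carrier_mat (deg p) (deg p) \<Longrightarrow> sig A * P = P * A"
    and Qsig: "\<And>A. A \<in> carrier_mat (deg p) (deg p) \<Longrightarrow> Q * sig A = A * Q"
    using unital_hom_intertwiners[OF sig_one d0] by metis
  have rho_sig: "rho h = sig (comp p h)" for h
    using idem_p rc[of h] rep_mult[OF rep, of h "idem p"] unfolding mult_idem[OF p] sig_def by simp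
  have rho_PQ: "rho h * (P * Q) = P * comp p h * Q" for h
  proof -
    have "rho h * (P * Q) = (sig (comp p h) * P) * Q"
      unfolding rho_sig using P Q sig_carrier by (simp add: assoc_mult_mat[of _ d d _ "deg p" _ d])
    then show ?thesis using sigP[OF comp_carrier[OF p]] by simp
  qed
  have "P * Q * rho h = rho h * (P * Q)" for h
  proof -
    have "P * Q * rho h = P * (Q * sig (comp p h))"
      unfolding rho_sig using P Q sig_carrier by (simp add: assoc_mult_mat[of _ d "deg p" _ d _ d])
    also have "\<dots> = P * comp p h * Q"
      using Qsig[OF comp_carrier[OF p]] P Q comp_carrier[OF p]
      by (simp add: assoc_mult_mat[of _ d "deg p" _ "deg p" _ d])
    finally show ?thesis unfolding rho_PQ .
  qed
  then have PQ: "P * Q = 1\<^sub>m d" by (rule irreducible_rep_right_inverse[OF irr P Q QP deg_pos[OF p]])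
  have "rho h = P * comp p h * Q" for h using rho_PQ[of h] rc[of h] unfolding PQ by simp
  then show thesis using that p P Q PQ QP by blast
qed

end

section \<open>Schur relations\<close>

lemma character_conj:
  assumes rep: "matrix_rep smul rho d" and rep': "matrix_rep smul r n"
    and P: "P \<in> carrier_mat d n" and Q: "Q \<in> carrier_mat n d" and QP: "Q * P = 1\<^sub>m n"
    and conj: "\<And>h. rho h = P * r h * Q"
  shows "character rho = character r"
proof
  fix h
  have "character rho h = (\<Sum>i<d. (P * r h * Q) $$ (i,i))"
    unfolding character_def conj[symmetric] using rep_dims[OF rep] by simp
  also have "\<dots> = (\<Sum>x<n. r h $$ (x,x))" by (rule trace_conj[OF P rep_carrier[OF rep'] Q QP])
  also have "\<dots> = character r h" unfolding character_def using rep_dims[OF rep'] by simp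
  finally show "character rho h = character r h" .
qed

lemma symmetrizing_trace_sum:
  assumes "symmetrizing_trace smul tau"
  shows "tau (sum f S) = (\<Sum>x\<in>S. tau (f x))"
proof -
  have add: "\<And>a b. tau (a + b) = tau a + tau b" using assms unfolding symmetrizing_trace_def by blast
  then have "tau 0 = 0" by (metis add_cancel_right_right)
  then show ?thesis by (induction S rule: infinite_finite_induct) (auto simp: add)
qed

lemma star_symmetric_basis_expand:
  assumes alg: "K_algebra smul" and tr: "symmetrizing_trace smul tau"
    and sb: "star_symmetric_basis smul tau star B" and fin: "finite B"
  shows "h = (\<Sum>b\<in>B. smul (tau (h * star b)) b)"
proof -
  interpret v: vector_space smul using alg unfolding K_algebra_def by blast
  have smul_mult: "\<And>c a b. smul c a * b = smul c (a * b)" using alg unfolding K_algebra_def by metis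
  have orth: "\<And>b c. b \<in> B \<Longrightarrow> c \<in> B \<Longrightarrow> tau (b * star c) = (if b = c then 1 else 0)"
    using sb unfolding star_symmetric_basis_def by blast
  have tau_smul: "\<And>a x. tau (smul a x) = a * tau x" using tr unfolding symmetrizing_trace_def by blast
  have "h \<in> v.span B" using sb unfolding star_symmetric_basis_def is_K_basis_def by blast
  then obtain u where hu: "h = (\<Sum>v\<in>B. smul (u v) v)" using v.span_finite[OF fin] by blast
  have "tau (h * star c) = u c" if c: "c \<in> B" for c
  proof -
    have "tau (h * star c) = (\<Sum>v\<in>B. u v * tau (v * star c))"
      unfolding hu sum_distrib_right smul_mult by (simp add: symmetrizing_trace_sum[OF tr] tau_smul)
    also have "\<dots> = u c" using c fin by (simp add: orth if_distrib[of "\<lambda>z. _ * z"] sum.delta cong: if_cong)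
    finally show ?thesis .
  qed
  then show ?thesis using hu by (metis (no_types, lifting) sum.cong)
qed

lemma intertwining_extends:
  assumes alg: "K_algebra smul" and rep: "matrix_rep smul rho d"
    and inv: "involutive_antiaut smul star" and bas: "is_K_basis smul B"
    and Om: "Omega \<in> carrier_mat d d"
    and int: "\<forall>x\<in>B. Omega * rho x = transpose_mat (rho (star x)) * Omega"
  shows "Omega * rho x = transpose_mat (rho (star x)) * Omega"
proof -
  interpret v: vector_space smul using alg unfolding K_algebra_def by blast
  have star_add: "\<And>a b. star (a + b) = star a + star b"
    and star_smul: "\<And>c a. star (smul c a) = smul c (star a)"
    using inv unfolding involutive_antiaut_def by blast+
  have "star 0 = 0" using star_add[of 0 0] by (metis add_cancel_right_right)
  have rc: "\<And>h. rho h \<in> carrier_mat d d" using rep_carrier[OF rep] .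
  have "x \<in> v.span B" using bas unfolding is_K_basis_def by blast
  then show ?thesis
  proof (induction rule: v.span_induct_alt)
    case base
    then show ?case using \<open>star 0 = 0\<close> rep_zero[OF rep] Om by simp
  next
    case (step c b y)
    have "Omega * rho (smul c b + y) = c \<cdot>\<^sub>m (Omega * rho b) + Omega * rho y"
      unfolding rep_add[OF rep] rep_smul[OF rep]
      using mult_add_distrib_mat[OF Om smult_carrier_mat[OF rc] rc] mult_smult_distrib[OF Om rc] by simp
    also have "\<dots> = c \<cdot>\<^sub>m (transpose_mat (rho (star b)) * Omega) + transpose_mat (rho (star y)) * Omega"
      using int step by simp
    also have "\<dots> = transpose_mat (c \<cdot>\<^sub>m rho (star b) + rho (star y)) * Omega"
    proof -
      have "transpose_mat (c \<cdot>\<^sub>m rho (star b)) = c \<cdot>\<^sub>m transpose_mat (rho (star b))" by auto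
      then show ?thesis
        using Om rc transpose_add[OF smult_carrier_mat[OF rc] rc, of c "star b" "star y"]
        by (simp add: add_mult_distrib_mat[of _ d d] mult_smult_assoc_mat[of _ d d])
    qed
    also have "\<dots> = transpose_mat (rho (star (smul c b + y))) * Omega"
      by (simp add: star_add star_smul rep_add[OF rep] rep_smul[OF rep])
    finally show ?case .
  qed
qed

context wedderburn
begin

lemma basis_finite:
  assumes "is_K_basis smul B"
  shows "finite B"
proof -
  interpret v: vector_space smul using alg unfolding K_algebra_def by blast
  define G where "G = (\<Union>p<N. \<Union>x<deg p. \<Union>y<deg p. {block p (matrix_unit (deg p) x y)})"
  have "h \<in> v.span G" for h
  proof -
    have "h = (\<Sum>p<N. \<Sum>x<deg p. \<Sum>y<deg p. smul (comp p h $$ (x,y)) (block p (matrix_unit (deg p) x y)))"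
      by (subst sum_blocks) (intro sum.cong refl block_expand, simp)
    also have "\<dots> \<in> v.span G"
      by (intro v.span_sum v.span_scale v.span_base) (auto simp: G_def)
    finally show ?thesis .
  qed
  moreover have "finite G" unfolding G_def by simp
  moreover have "v.independent B" using assms unfolding is_K_basis_def by blast
  ultimately show ?thesis using v.independent_span_bound by blast
qed

lemma irr_chars_eq_comp:
  assumes "\<chi> \<in> irr_chars smul"
  shows "\<exists>q<N. \<chi> = character (comp q)"
proof -
  obtain rho d where chi: "\<chi> = character rho" and irr: "irreducible_rep smul rho d"
    using assms unfolding irr_chars_def by blast
  obtain q P Q where "q < N" "P \<in> carrier_mat d (deg q)" "Q \<in> carrier_mat (deg q) d"
    "Q * P = 1\<^sub>m (deg q)" "\<And>h. rho h = P * comp q h * Q"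
    using irreducible_rep_conj_comp[OF irr] by metis
  then show ?thesis using character_conj irr comp_rep unfolding chi irreducible_rep_def by metis
qed

text \<open>On the \<open>p\<close>-th Wedderburn block only the \<open>p\<close>-th summand of \<open>\<tau> = \<Sum> c\<^sub>\<chi>\<^sup>-\<^sup>1 \<chi>\<close> survives.\<close>

lemma trace_form_block:
  assumes sc: "schur_elements smul tau c" and p: "p < N" and A: "A \<in> carrier_mat (deg p) (deg p)"
  shows "tau (block p A * y) = inverse (c (character (comp p))) * character (comp p) (block p A * y)"
proof -
  have fin: "finite (irr_chars smul)"
    and tau_eq: "\<And>h. tau h = (\<Sum>\<chi> \<in> irr_chars smul. inverse (c \<chi>) * \<chi> h)"
    using sc unfolding schur_elements_def by blast+
  have chi_p: "character (comp p) \<in> irr_chars smul"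
    unfolding irr_chars_def using comp_irreducible[OF p] by blast
  have vanish: "\<chi> (block p A * y) = 0" if chi: "\<chi> \<in> irr_chars smul - {character (comp p)}" for \<chi>
  proof -
    obtain q where q: "q < N" "\<chi> = character (comp q)" using irr_chars_eq_comp chi by blast
    then have "q \<noteq> p" using chi by auto
    then have "comp q (block p A * y) = 0\<^sub>m (deg q) (deg q)"
      using comp_block[OF A q(1)] left_mult_zero_mat[OF comp_carrier[OF q(1)]]
      by (simp add: rep_mult[OF comp_rep[OF q(1)]])
    then show ?thesis unfolding q(2) character_def by simp
  qed
  have "(\<Sum>\<chi> \<in> irr_chars smul - {character (comp p)}. inverse (c \<chi>) * \<chi> (block p A * y)) = 0"
    by (rule sum.neutral) (simp add: vanish)
  then show ?thesis unfolding tau_eq sum.remove[OF fin chi_p] by simp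
qed

lemma rho_block_conj:
  assumes p: "p < N" and P: "P \<in> carrier_mat d (deg p)" and Q: "Q \<in> carrier_mat (deg p) d"
    and PQ: "P * Q = 1\<^sub>m d" and conj: "\<And>h. rho h = P * comp p h * Q"
    and A: "A \<in> carrier_mat d d"
  shows "rho (block p (Q * A * P)) = A"
proof -
  have QAP: "Q * A * P \<in> carrier_mat (deg p) (deg p)"
    using mult_carrier_mat[OF mult_carrier_mat[OF Q A] P] .
  have "rho (block p (Q * A * P)) = P * (Q * A * P) * Q"
    unfolding conj using comp_block[OF QAP p] by simp
  also have "P * (Q * A * P) = (P * (Q * A)) * P"
    using P Q A by (simp add: assoc_mult_mat[of P d "deg p" _ d _ "deg p"])
  also have "P * (Q * A) = (P * Q) * A"
    using P Q A by (simp add: assoc_mult_mat[of P d "deg p" Q d _ d])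
  also have "(P * Q) * A * P * Q = A * (P * Q)"
    using P Q A PQ by (simp add: assoc_mult_mat[of _ d d P "deg p" Q d])
  finally show ?thesis using PQ A by simp
qed

lemma schur_relations:
  assumes tr: "symmetrizing_trace smul tau" and sc: "schur_elements smul tau c"
    and sb: "star_symmetric_basis smul tau star B" and irr: "irreducible_rep smul rho d"
    and ijkl: "i < d" "j < d" "k < d" "l < d"
  shows "(\<Sum>b\<in>B. rho b $$ (i,j) * rho (star b) $$ (k,l))
    = c (character rho) * (if i = l \<and> j = k then 1 else 0)"
proof -
  have rep: "matrix_rep smul rho d" using irr unfolding irreducible_rep_def by blast
  obtain p P Q where p: "p < N" and P: "P \<in> carrier_mat d (deg p)" and Q: "Q \<in> carrier_mat (deg p) d"
    and PQ: "P * Q = 1\<^sub>m d" and QP: "Q * P = 1\<^sub>m (deg p)" and conj: "\<And>h. rho h = P * comp p h * Q"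
    using irreducible_rep_conj_comp[OF irr] by metis
  have chr: "character rho = character (comp p)" by (rule character_conj[OF rep comp_rep[OF p] P Q QP conj])
  define cl where "cl = c (character rho)"
  have cl: "cl \<noteq> 0"
    using sc irr unfolding cl_def schur_elements_def irr_chars_def by blast
  \<comment> \<open>The element \<open>h\<close> acting as the matrix unit \<open>E\<^sub>l\<^sub>k\<close> on \<open>\<rho>\<close> and as zero on all other blocks.\<close>
  define h where "h = block p (Q * matrix_unit d l k * P)"
  have A: "Q * matrix_unit d l k * P \<in> carrier_mat (deg p) (deg p)"
    using mult_carrier_mat[OF mult_carrier_mat[OF Q matrix_unit_carrier] P] .
  have rho_h: "rho h = matrix_unit d l k"
    unfolding h_def by (rule rho_block_conj[OF p P Q PQ conj matrix_unit_carrier])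
  have tau_h: "tau (h * y) = inverse cl * rho y $$ (k,l)" for y
  proof -
    have "tau (h * y) = inverse cl * character rho (h * y)"
      using trace_form_block[OF sc p A, of y] unfolding h_def cl_def chr by simp
    also have "character rho (h * y) = (\<Sum>a<d. \<Sum>t<d. rho h $$ (a,t) * rho y $$ (t,a))"
      unfolding character_def using rep_dims[OF rep] by (simp add: rep_mult_entry[OF rep])
    also have "\<dots> = (\<Sum>a<d. \<Sum>t<d. if a = l \<and> t = k then rho y $$ (t,a) else 0)"
      unfolding rho_h by (intro sum.cong refl) auto
    also have "\<dots> = rho y $$ (k,l)" by (rule sum_sum_delta[OF ijkl(4) ijkl(3)])
    finally show ?thesis .
  qed
  have fin: "finite B" using sb basis_finite unfolding star_symmetric_basis_def by blast
  have "(if i = l \<and> j = k then 1 else 0) = rho (\<Sum>b\<in>B. smul (tau (h * star b)) b) $$ (i,j)"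
    using star_symmetric_basis_expand[OF alg tr sb fin, of h] rho_h ijkl by simp
  also have "\<dots> = inverse cl * (\<Sum>b\<in>B. rho b $$ (i,j) * rho (star b) $$ (k,l))"
    using fin ijkl by (simp add: rep_sum_entry[OF rep] rep_smul_entry[OF rep] tau_h
        sum_distrib_left algebra_simps)
  finally show ?thesis using cl unfolding cl_def[symmetric] by (simp add: field_simps)
qed

end

lemma split_semisimple_wedderburn:
  assumes "split_semisimple smul"
  obtains rs where "wedderburn smul rs"
  using assms unfolding split_semisimple_def wedderburn_def by blast

section \<open>Valuations of Schur elements\<close>

text \<open>Modulo \<open>\<mathfrak>m\<close> only the diagonal entries of \<open>\<Omega>\<close> survive in the \<open>(s,t)\<close> entry of
  \<open>\<Omega> X = Y\<^sup>T \<Omega>\<close>.\<close>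

lemma intertwining_residue:
  fixes nu :: "'k::field \<Rightarrow> 'g::linordered_ab_group_add"
  assumes val: "valuation nu" and Om: "Omega \<in> carrier_mat d d" and OmO: "mat_over (val_ring nu) Omega"
    and off: "\<forall>i<d. \<forall>j<d. i \<noteq> j \<longrightarrow> Omega $$ (i,j) \<in> val_ideal nu"
    and X: "X \<in> carrier_mat d d" and Y: "Y \<in> carrier_mat d d"
    and int: "Omega * X = transpose_mat Y * Omega" and st: "s < d" "t < d"
    and vX: "\<forall>i<d. \<forall>j<d. v * X $$ (i,j) \<in> val_ring nu"
    and vY: "\<forall>i<d. \<forall>j<d. v * Y $$ (i,j) \<in> val_ring nu"
  shows "Omega $$ (t,t) * (v * Y $$ (t,s)) - Omega $$ (s,s) * (v * X $$ (s,t)) \<in> val_ideal nu"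
proof -
  have YT: "transpose_mat Y \<in> carrier_mat d d" using Y by simp
  have "(\<Sum>u<d. Omega $$ (s,u) * X $$ (u,t)) = (\<Sum>u<d. Y $$ (u,s) * Omega $$ (u,t))"
    using arg_cong[OF int, of "\<lambda>M. M $$ (s,t)"] Y st
    unfolding index_mult_mat_sum[OF Om X st] index_mult_mat_sum[OF YT Om st] by simp
  then have "(\<Sum>u<d. Omega $$ (s,u) * (v * X $$ (u,t))) = (\<Sum>u<d. (v * Y $$ (u,s)) * Omega $$ (u,t))"
    by (metis (no_types, lifting) mult.left_commute mult.assoc sum.cong sum_distrib_left)
  moreover have "(\<Sum>u<d. Omega $$ (s,u) * (v * X $$ (u,t)))
      = Omega $$ (s,s) * (v * X $$ (s,t)) + (\<Sum>u\<in>{..<d} - {s}. Omega $$ (s,u) * (v * X $$ (u,t)))"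
    by (rule sum.remove) (use st in auto)
  moreover have "(\<Sum>u<d. (v * Y $$ (u,s)) * Omega $$ (u,t))
      = (v * Y $$ (t,s)) * Omega $$ (t,t) + (\<Sum>u\<in>{..<d} - {t}. (v * Y $$ (u,s)) * Omega $$ (u,t))"
    by (rule sum.remove) (use st in auto)
  ultimately have "Omega $$ (s,s) * (v * X $$ (s,t)) + (\<Sum>u\<in>{..<d} - {s}. Omega $$ (s,u) * (v * X $$ (u,t)))
      = (v * Y $$ (t,s)) * Omega $$ (t,t) + (\<Sum>u\<in>{..<d} - {t}. (v * Y $$ (u,s)) * Omega $$ (u,t))"
    by simp
  then have "Omega $$ (t,t) * (v * Y $$ (t,s)) - Omega $$ (s,s) * (v * X $$ (s,t))
     = (\<Sum>u\<in>{..<d} - {s}. Omega $$ (s,u) * (v * X $$ (u,t)))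
       - (\<Sum>u\<in>{..<d} - {t}. (v * Y $$ (u,s)) * Omega $$ (u,t))"
    by (simp add: algebra_simps)
  also have "\<dots> \<in> val_ideal nu"
  proof (rule val_ideal_diff[OF val]; rule val_ideal_sum[OF val])
    fix u assume u: "u \<in> {..<d} - {s}"
    then have "Omega $$ (s,u) \<in> val_ideal nu" using off st by auto
    moreover have "v * X $$ (u,t) \<in> val_ring nu" using vX u st by auto
    ultimately show "Omega $$ (s,u) * (v * X $$ (u,t)) \<in> val_ideal nu" by (rule val_ideal_mult[OF val])
  next
    fix u assume u: "u \<in> {..<d} - {t}"
    then have "Omega $$ (u,t) \<in> val_ideal nu" using off st by auto
    moreover have "v * Y $$ (u,s) \<in> val_ring nu" using vY u st by auto
    ultimately show "(v * Y $$ (u,s)) * Omega $$ (u,t) \<in> val_ideal nu"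
      using val_ideal_mult[OF val] by (metis mult.commute)
  qed
  finally show ?thesis .
qed

locale schur_orthogonality =
  fixes nu :: "'k::field \<Rightarrow> 'g::linordered_ab_group_add" and rho :: "'h \<Rightarrow> 'k mat" and d :: nat
    and star :: "'h \<Rightarrow> 'h" and B :: "'h set" and cl :: 'k
  assumes surj_val: "surj_valuation nu" and formally_real: "residue_formally_real nu"
    and rho_carrier: "\<And>x. rho x \<in> carrier_mat d d"
    and finite_B: "finite B" and star_B: "\<And>b. b \<in> B \<Longrightarrow> star b \<in> B"
    and schur: "\<And>i j k l. i < d \<Longrightarrow> j < d \<Longrightarrow> k < d \<Longrightarrow> l < d \<Longrightarrow>
        (\<Sum>b\<in>B. rho b $$ (i,j) * rho (star b) $$ (k,l)) = cl * (if i = l \<and> j = k then 1 else 0)"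
    and cl_nonzero: "cl \<noteq> 0" and d_pos: "0 < d"
begin

lemma val: "valuation nu"
  using surj_val unfolding surj_valuation_def by blast

lemma min_val_entry:
  "\<exists>b0\<in>B. \<exists>s<d. \<exists>t<d. rho b0 $$ (s,t) \<noteq> 0 \<and>
     (\<forall>b\<in>B. mat_val_ge nu (rho b) (nu (rho b0 $$ (s,t))))"
proof -
  define S where "S = {(b,i,j). b \<in> B \<and> i < d \<and> j < d \<and> rho b $$ (i,j) \<noteq> 0}"
  define f where "f = (\<lambda>(b,i,j). nu (rho b $$ (i,j)))"
  have "S \<subseteq> B \<times> {..<d} \<times> {..<d}" unfolding S_def by auto
  then have fin: "finite S" using finite_B finite_subset by blast
  have "\<exists>b\<in>B. rho b $$ (0,0) \<noteq> 0"
    using schur[OF d_pos d_pos d_pos d_pos] cl_nonzero sum.neutral by force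
  then have "S \<noteq> {}" using d_pos unfolding S_def by blast
  define m where "m = Min (f ` S)"
  have "m \<in> f ` S" unfolding m_def using fin \<open>S \<noteq> {}\<close> by (intro Min_in) auto
  then obtain z where z: "z \<in> S" "f z = m" by blast
  obtain b0 s t where b0: "z = (b0,s,t)" by (cases z) auto
  have bound: "mat_val_ge nu (rho b) (nu (rho b0 $$ (s,t)))" if b: "b \<in> B" for b
  proof -
    have "nu (rho b0 $$ (s,t)) \<le> nu (rho b $$ (i,j))" if "i < d" "j < d" "rho b $$ (i,j) \<noteq> 0" for i j
    proof -
      have "(b,i,j) \<in> S" using b that unfolding S_def by auto
      then have "m \<le> f (b,i,j)" unfolding m_def using fin by (intro Min_le) auto
      then show ?thesis using z(2) unfolding b0 f_def by simp
    qed
    then show ?thesis using rho_carrier[of b] unfolding mat_val_ge_def by auto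
  qed
  moreover from z(1) have "b0 \<in> B" "s < d" "t < d" "rho b0 $$ (s,t) \<noteq> 0" unfolding b0 S_def by auto
  ultimately show ?thesis by (intro bexI[of _ b0] exI[of _ s] exI[of _ t]) auto
qed

text \<open>Rescale \<open>\<rho>\<close> so that its entries of minimal valuation \<open>m\<close> become units. The Schur
  relation writes \<open>v\<^sup>2 c\<close> as a sum of products of integral entries, so \<open>v\<^sup>2 c \<in> \<O>\<close>; once it is
  known to be a unit, \<open>\<nu>(c) = 2 m\<close>.\<close>

lemma half_val_bound:
  assumes unit: "\<And>v s t b0. v \<noteq> 0 \<Longrightarrow> (\<forall>b\<in>B. \<forall>i<d. \<forall>j<d. v * rho b $$ (i,j) \<in> val_ring nu) \<Longrightarrow>
     b0 \<in> B \<Longrightarrow> s < d \<Longrightarrow> t < d \<Longrightarrow> v * rho b0 $$ (s,t) \<notin> val_ideal nu \<Longrightarrow>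
     v * v * cl \<notin> val_ideal nu"
  shows "\<exists>m. nu cl = m + m \<and> (\<forall>b\<in>B. mat_val_ge nu (rho b) m)"
proof -
  obtain b0 s t where b0: "b0 \<in> B" "s < d" "t < d" "rho b0 $$ (s,t) \<noteq> 0"
    and bound: "\<forall>b\<in>B. mat_val_ge nu (rho b) (nu (rho b0 $$ (s,t)))"
    using min_val_entry by blast
  define m where "m = nu (rho b0 $$ (s,t))"
  obtain v where v: "v \<noteq> 0" "nu v = - m" using surj_val unfolding surj_valuation_def by blast
  have integral: "\<forall>b\<in>B. \<forall>i<d. \<forall>j<d. v * rho b $$ (i,j) \<in> val_ring nu"
  proof (intro ballI allI impI)
    fix b i j assume "b \<in> B" "i < d" "j < d"
    then have "rho b $$ (i,j) = 0 \<or> m \<le> nu (rho b $$ (i,j))"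
      using bound \<open>b \<in> B\<close> rho_carrier[of b] unfolding mat_val_ge_def m_def by auto
    then show "v * rho b $$ (i,j) \<in> val_ring nu" by (rule val_ring_scaled[OF val _ v])
  qed
  have "nu (v * rho b0 $$ (s,t)) = 0" using val_mult[OF val v(1) b0(4)] v(2) m_def by simp
  then have "v * rho b0 $$ (s,t) \<notin> val_ideal nu" using v(1) b0(4) by (simp add: val_ideal_def)
  then have not_ideal: "v * v * cl \<notin> val_ideal nu" using unit[OF v(1) integral b0(1-3)] by blast
  have "v * v * cl = v * v * (\<Sum>b\<in>B. rho b $$ (s,t) * rho (star b) $$ (t,s))"
    using schur[OF b0(2,3,3,2)] by simp
  also have "\<dots> = (\<Sum>b\<in>B. (v * rho b $$ (s,t)) * (v * rho (star b) $$ (t,s)))"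
    unfolding sum_distrib_left by (intro sum.cong refl) (simp add: algebra_simps)
  also have "\<dots> \<in> val_ring nu"
  proof (rule val_ring_sum[OF val])
    fix b assume "b \<in> B"
    then have "v * rho b $$ (s,t) \<in> val_ring nu" "v * rho (star b) $$ (t,s) \<in> val_ring nu"
      using integral star_B b0(2,3) by blast+
    then show "v * rho b $$ (s,t) * (v * rho (star b) $$ (t,s)) \<in> val_ring nu"
      by (rule val_ring_mult[OF val])
  qed
  finally have "nu (v * v * cl) = 0" using val_unit[OF val] not_ideal by blast
  then have "nu v + nu v + nu cl = 0" using v(1) cl_nonzero by (simp add: val_mult[OF val])
  then have "nu cl = m + m" using v(2) by (simp add: algebra_simps eq_neg_iff_add_eq_0)
  then show ?thesis using bound m_def by blast
qed


text \<open>Case of a form that is diagonal modulo \<open>\<mathfrak>m\<close>: with \<open>X\<^sub>b = \<Omega>\<^sub>s\<^sub>s v \<rho>(b)\<^sub>s\<^sub>t\<close> and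
  \<open>Y\<^sub>b = \<Omega>\<^sub>t\<^sub>t v \<rho>(b\<^sup>*)\<^sub>t\<^sub>s\<close> we have \<open>Y\<^sub>b \<equiv> X\<^sub>b\<close> modulo \<open>\<mathfrak>m\<close>, so
  \<open>\<Omega>\<^sub>s\<^sub>s \<Omega>\<^sub>t\<^sub>t v\<^sup>2 c = \<Sum> X\<^sub>b Y\<^sub>b \<equiv> \<Sum> X\<^sub>b\<^sup>2\<close>, a unit since \<open>F\<close> is formally real.\<close>

lemma diagonal_form_val_bound:
  assumes Om: "Omega \<in> carrier_mat d d" and OmO: "mat_over (val_ring nu) Omega"
    and off: "\<forall>i<d. \<forall>j<d. i \<noteq> j \<longrightarrow> Omega $$ (i,j) \<in> val_ideal nu"
    and diag: "\<forall>i<d. Omega $$ (i,i) \<notin> val_ideal nu"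
    and int: "\<And>x. x \<in> B \<Longrightarrow> Omega * rho x = transpose_mat (rho (star x)) * Omega"
  shows "\<exists>m. nu cl = m + m \<and> (\<forall>b\<in>B. mat_val_ge nu (rho b) m)"
proof (rule half_val_bound)
  fix v s t b0
  assume integral: "\<forall>b\<in>B. \<forall>i<d. \<forall>j<d. v * rho b $$ (i,j) \<in> val_ring nu"
    and b0: "b0 \<in> B" and st: "s < d" "t < d" and unit: "v * rho b0 $$ (s,t) \<notin> val_ideal nu"
  have OmO': "\<And>i j. i < d \<Longrightarrow> j < d \<Longrightarrow> Omega $$ (i,j) \<in> val_ring nu"
    using OmO Om unfolding mat_over_def by auto
  define X where "X b = Omega $$ (s,s) * (v * rho b $$ (s,t))" for b
  define Y where "Y b = Omega $$ (t,t) * (v * rho (star b) $$ (t,s))" for b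
  have X: "X b \<in> val_ring nu" if "b \<in> B" for b
    unfolding X_def by (rule val_ring_mult[OF val]) (use OmO' st integral that in auto)
  have YX: "Y b - X b \<in> val_ideal nu" if b: "b \<in> B" for b
    unfolding X_def Y_def
    by (rule intertwining_residue[OF val Om OmO off rho_carrier rho_carrier int[OF b] st])
      (use integral b star_B in auto)
  have X0: "X b0 \<notin> val_ideal nu" unfolding X_def
    by (rule val_unit_mult[OF val OmO'[OF st(1) st(1)] diag[rule_format, OF st(1)]])
      (use integral b0 unit st in auto)
  have squares: "(\<Sum>b\<in>B. X b * X b) \<notin> val_ideal nu"
    by (rule sum_squares_notin_val_ideal[where f = X, OF val formally_real finite_B X b0 X0])
  have "Omega $$ (s,s) * Omega $$ (t,t) * (v * v * cl)
     = Omega $$ (s,s) * Omega $$ (t,t) * (v * v) * (\<Sum>b\<in>B. rho b $$ (s,t) * rho (star b) $$ (t,s))"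
    using schur[OF st(1,2,2,1)] by simp
  also have "\<dots> = (\<Sum>b\<in>B. X b * Y b)"
    unfolding sum_distrib_left X_def Y_def by (intro sum.cong refl) (simp add: algebra_simps)
  also have "\<dots> = (\<Sum>b\<in>B. X b * X b) + (\<Sum>b\<in>B. X b * (Y b - X b))"
    by (simp add: sum.distrib[symmetric] algebra_simps)
  finally have eq: "(\<Sum>b\<in>B. X b * X b)
      = Omega $$ (s,s) * Omega $$ (t,t) * (v * v * cl) - (\<Sum>b\<in>B. X b * (Y b - X b))"
    by (simp add: algebra_simps)
  have "(\<Sum>b\<in>B. X b * (Y b - X b)) \<in> val_ideal nu"
  proof (rule val_ideal_sum[OF val])
    fix b assume "b \<in> B"
    then show "X b * (Y b - X b) \<in> val_ideal nu"
      using val_ideal_mult[OF val YX X] by (simp add: mult.commute)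
  qed
  then have "Omega $$ (s,s) * Omega $$ (t,t) * (v * v * cl) \<notin> val_ideal nu"
    using squares val_ideal_diff[OF val] unfolding eq by blast
  then show "v * v * cl \<notin> val_ideal nu"
    using val_ideal_mult[OF val _ val_ring_mult[OF val OmO'[OF st(1) st(1)] OmO'[OF st(2) st(2)]]]
    by (auto simp: mult.commute)
qed

text \<open>Case of a form invertible over \<open>\<O>\<close>: \<open>\<rho>(b)\<^sub>s\<^sub>t = (\<Omega> \<rho>(b\<^sup>*) \<Omega>\<^sup>-\<^sup>1)\<^sub>t\<^sub>s\<close>, so the Schur
  relations give \<open>\<Sum>\<^sub>b (v \<rho>(b)\<^sub>s\<^sub>t)\<^sup>2 = \<Omega>\<^sub>t\<^sub>t (\<Omega>\<^sup>-\<^sup>1)\<^sub>s\<^sub>s v\<^sup>2 c\<close>.\<close>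

lemma invertible_form_val_bound:
  assumes Om: "Omega \<in> carrier_mat d d" and OmO: "mat_over (val_ring nu) Omega"
    and Om': "Omega' \<in> carrier_mat d d" and OmO': "mat_over (val_ring nu) Omega'"
    and inv: "Omega * Omega' = 1\<^sub>m d"
    and star_star: "\<And>x. star (star x) = x"
    and int: "\<And>x. x \<in> B \<Longrightarrow> Omega * rho x = transpose_mat (rho (star x)) * Omega"
  shows "\<exists>m. nu cl = m + m \<and> (\<forall>b\<in>B. mat_val_ge nu (rho b) m)"
proof (rule half_val_bound)
  fix v s t b0
  assume integral: "\<forall>b\<in>B. \<forall>i<d. \<forall>j<d. v * rho b $$ (i,j) \<in> val_ring nu"
    and b0: "b0 \<in> B" and st: "s < d" "t < d" and unit: "v * rho b0 $$ (s,t) \<notin> val_ideal nu"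
  have entry: "rho b $$ (s,t) = (\<Sum>p<d. \<Sum>q<d. Omega $$ (t,p) * rho (star b) $$ (p,q) * Omega' $$ (q,s))"
    if b: "b \<in> B" for b
  proof -
    have RT: "transpose_mat (rho b) \<in> carrier_mat d d" using rho_carrier[of b] by simp
    have "Omega * rho (star b) * Omega' = transpose_mat (rho b) * Omega * Omega'"
      using int[OF star_B[OF b]] star_star by simp
    also have "\<dots> = transpose_mat (rho b)" using assoc_mult_mat[OF RT Om Om'] inv RT by simp
    finally have "rho b $$ (s,t) = (Omega * rho (star b) * Omega') $$ (t,s)"
      using rho_carrier[of b] st by simp
    then show ?thesis by (simp add: index_mult_mat3_sum[OF Om rho_carrier Om' st(2) st(1)])
  qed
  have "(\<Sum>b\<in>B. rho b $$ (s,t) * rho b $$ (s,t))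
      = (\<Sum>p<d. \<Sum>q<d. Omega $$ (t,p) * Omega' $$ (q,s) * (\<Sum>b\<in>B. rho b $$ (s,t) * rho (star b) $$ (p,q)))"
  proof -
    have "(\<Sum>b\<in>B. rho b $$ (s,t) * rho b $$ (s,t))
      = (\<Sum>b\<in>B. \<Sum>p<d. \<Sum>q<d. Omega $$ (t,p) * Omega' $$ (q,s) * (rho b $$ (s,t) * rho (star b) $$ (p,q)))"
    proof (rule sum.cong[OF refl])
      fix b assume b: "b \<in> B"
      show "rho b $$ (s,t) * rho b $$ (s,t)
        = (\<Sum>p<d. \<Sum>q<d. Omega $$ (t,p) * Omega' $$ (q,s) * (rho b $$ (s,t) * rho (star b) $$ (p,q)))"
        by (subst (2) entry[OF b]) (simp add: sum_distrib_left algebra_simps)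
    qed
    then show ?thesis by (simp add: sum_distrib_left sum.swap[of _ B])
  qed
  also have "\<dots> = (\<Sum>p<d. \<Sum>q<d. if p = t \<and> q = s then Omega $$ (t,p) * Omega' $$ (q,s) * cl else 0)"
    by (intro sum.cong refl) (auto simp: schur st)
  also have "\<dots> = Omega $$ (t,t) * Omega' $$ (s,s) * cl" by (rule sum_sum_delta[OF st(2) st(1)])
  finally have squares_eq: "(\<Sum>b\<in>B. (v * rho b $$ (s,t)) * (v * rho b $$ (s,t)))
      = (v * v * cl) * (Omega $$ (t,t) * Omega' $$ (s,s))"
    by (simp add: sum_distrib_left[symmetric] algebra_simps)
  have "(\<Sum>b\<in>B. (v * rho b $$ (s,t)) * (v * rho b $$ (s,t))) \<notin> val_ideal nu"
    using integral st
    by (intro sum_squares_notin_val_ideal[where f = "\<lambda>b. v * rho b $$ (s,t)", OF val formally_real finite_B _ b0 unit]) auto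
  moreover have "Omega $$ (t,t) * Omega' $$ (s,s) \<in> val_ring nu"
    using OmO OmO' Om Om' st unfolding mat_over_def by (auto intro: val_ring_mult[OF val])
  ultimately show "v * v * cl \<notin> val_ideal nu"
    unfolding squares_eq using val_ideal_mult[OF val] by blast
qed

end

section \<open>Balanced representations\<close>

lemma double_cancel: "(a::'g::linordered_ab_group_add) + a = b + b \<Longrightarrow> a = b"
  by (metis add_diff_add diff_self double_zero eq_iff_diff_eq_0)

lemma balancedI:
  assumes bound: "\<And>B'. star_symmetric_basis smul tau star B' \<Longrightarrow>
      \<exists>m'. nu cl = m' + m' \<and> (\<forall>b\<in>B'. mat_val_ge nu (rho b) m')"
    and m: "nu cl = m + m"
  shows "balanced nu smul tau star cl rho"
  unfolding balanced_def
proof (intro exI[of _ "- m"] conjI allI impI ballI)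
  show "nu cl = - (- m + - m)" using m by simp
  fix B' b assume sb: "star_symmetric_basis smul tau star B'" and b: "b \<in> B'"
  obtain m' where m': "nu cl = m' + m'" and bound': "\<forall>b\<in>B'. mat_val_ge nu (rho b) m'"
    using bound[OF sb] by blast
  have "m' = m" by (rule double_cancel) (rule trans[OF sym[OF m'] m])
  then show "mat_val_ge nu (rho b) (- (- m))" using bound' b by simp
qed

locale star_algebra_rep =
  fixes nu :: "'k::field \<Rightarrow> 'g::linordered_ab_group_add"
    and smul :: "'k \<Rightarrow> 'h::ring_1 \<Rightarrow> 'h"
    and tau :: "'h \<Rightarrow> 'k" and star :: "'h \<Rightarrow> 'h"
    and c :: "('h \<Rightarrow> 'k) \<Rightarrow> 'k"
    and rho :: "'h \<Rightarrow> 'k mat" and d :: nat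
  assumes surj_val: "surj_valuation nu"
    and formally_real: "residue_formally_real nu"
    and semisimple: "split_semisimple smul"
    and trace: "symmetrizing_trace smul tau"
    and antiaut: "involutive_antiaut smul star"
    and schur_elems: "schur_elements smul tau c"
    and rho_irr: "irreducible_rep smul rho d"
begin

abbreviation cl :: 'k where "cl \<equiv> c (character rho)"

lemma val: "valuation nu"
  using surj_val unfolding surj_valuation_def by blast

lemma rep: "matrix_rep smul rho d"
  using rho_irr unfolding irreducible_rep_def by blast

lemma schur_orthogonality_basis:
  assumes sb: "star_symmetric_basis smul tau star B"
  shows "schur_orthogonality nu rho d star B cl"
proof -
  obtain rs where "wedderburn smul rs" using split_semisimple_wedderburn[OF semisimple] .
  then interpret wedderburn smul rs .
  show ?thesis
  proof unfold_locales
    show "surj_valuation nu" by (rule surj_val)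
    show "residue_formally_real nu" by (rule formally_real)
    show "rho x \<in> carrier_mat d d" for x by (rule rep_carrier[OF rep])
    show "finite B" using sb basis_finite unfolding star_symmetric_basis_def by blast
    show "star b \<in> B" if "b \<in> B" for b using sb that unfolding star_symmetric_basis_def by blast
    show "(\<Sum>b\<in>B. rho b $$ (i,j) * rho (star b) $$ (k,l)) = cl * (if i = l \<and> j = k then 1 else 0)"
      if "i < d" "j < d" "k < d" "l < d" for i j k l
      by (rule schur_relations[OF trace schur_elems sb rho_irr that])
    show "cl \<noteq> 0" using schur_elems rho_irr unfolding schur_elements_def irr_chars_def by blast
    show "0 < d" using rho_irr unfolding irreducible_rep_def by blast
  qed
qed

lemma intertwining_basis_change:
  assumes "star_symmetric_basis smul tau star B" "star_symmetric_basis smul tau star B'"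
    and "Omega \<in> carrier_mat d d"
    and "\<forall>x\<in>B. Omega * rho x = transpose_mat (rho (star x)) * Omega"
  shows "\<forall>x\<in>B'. Omega * rho x = transpose_mat (rho (star x)) * Omega"
  using intertwining_extends[OF _ rep antiaut _ assms(3,4)] semisimple assms(1)
  unfolding split_semisimple_def star_symmetric_basis_def by blast

lemma scaled_rep_integral:
  assumes "mat_val_ge nu (rho x) m" "v \<noteq> 0" "nu v = - m" "s < d" "t < d"
  shows "v * rho x $$ (s,t) \<in> val_ring nu"
  using assms rep_carrier[OF rep, of x] unfolding mat_val_ge_def
  by (intro val_ring_scaled[OF val _ assms(2,3)]) auto

lemma diagonal_form_balanced:
  assumes sb: "star_symmetric_basis smul tau star B"
    and Om: "Omega \<in> carrier_mat d d" and OmO: "mat_over (val_ring nu) Omega"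
    and int: "\<forall>x\<in>B. Omega * rho x = transpose_mat (rho (star x)) * Omega"
    and off: "\<forall>i<d. \<forall>j<d. i \<noteq> j \<longrightarrow> Omega $$ (i,j) \<in> val_ideal nu"
    and diag: "\<forall>i<d. Omega $$ (i,i) \<notin> val_ideal nu"
  shows "\<exists>a. nu cl = - (a + a) \<and> balanced nu smul tau star cl rho \<and>
    (\<forall>v. v \<noteq> 0 \<and> nu v = a \<longrightarrow>
      (\<forall>x\<in>B. \<forall>s<d. \<forall>t<d. v * rho x $$ (s,t) \<in> val_ring nu \<and>
         Omega $$ (t,t) * (v * rho (star x) $$ (t,s)) - Omega $$ (s,s) * (v * rho x $$ (s,t))
           \<in> val_ideal nu))"
proof -
  have bound: "\<exists>m. nu cl = m + m \<and> (\<forall>b\<in>B'. mat_val_ge nu (rho b) m)"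
    if sb': "star_symmetric_basis smul tau star B'" for B'
  proof -
    interpret schur_orthogonality nu rho d star B' cl by (rule schur_orthogonality_basis[OF sb'])
    show ?thesis
      by (rule diagonal_form_val_bound[OF Om OmO off diag])
        (use intertwining_basis_change[OF sb sb' Om int] in blast)
  qed
  obtain m where m: "nu cl = m + m" and bd: "\<forall>b\<in>B. mat_val_ge nu (rho b) m"
    using bound[OF sb] by blast
  have star_B: "star x \<in> B" if "x \<in> B" for x using sb that unfolding star_symmetric_basis_def by blast
  have "\<forall>v. v \<noteq> 0 \<and> nu v = - m \<longrightarrow>
      (\<forall>x\<in>B. \<forall>s<d. \<forall>t<d. v * rho x $$ (s,t) \<in> val_ring nu \<and>
         Omega $$ (t,t) * (v * rho (star x) $$ (t,s)) - Omega $$ (s,s) * (v * rho x $$ (s,t))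
           \<in> val_ideal nu)"
  proof (intro allI impI ballI conjI)
    fix v x s t assume v: "v \<noteq> 0 \<and> nu v = - m" and x: "x \<in> B" and st: "s < d" "t < d"
    have integral: "v * rho b $$ (i,j) \<in> val_ring nu" if "b \<in> B" "i < d" "j < d" for b i j
      using bd that v by (intro scaled_rep_integral) auto
    show "v * rho x $$ (s,t) \<in> val_ring nu" by (rule integral[OF x st])
    show "Omega $$ (t,t) * (v * rho (star x) $$ (t,s)) - Omega $$ (s,s) * (v * rho x $$ (s,t))
        \<in> val_ideal nu"
      by (rule intertwining_residue[OF val Om OmO off rep_carrier[OF rep] rep_carrier[OF rep]
            int[rule_format, OF x] st]) (use integral x star_B[OF x] in auto)
  qed
  then show ?thesis using m balancedI[OF bound m] by (intro exI[of _ "- m"]) simp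
qed

lemma invertible_form_balanced:
  assumes sb: "star_symmetric_basis smul tau star B"
    and Om: "Omega \<in> carrier_mat d d" and OmO: "mat_over (val_ring nu) Omega"
    and Om': "Omega' \<in> carrier_mat d d" and OmO': "mat_over (val_ring nu) Omega'"
    and inv: "Omega * Omega' = 1\<^sub>m d"
    and int: "\<forall>x\<in>B. Omega * rho x = transpose_mat (rho (star x)) * Omega"
  shows "(\<exists>a. nu cl = - (a + a)) \<and> balanced nu smul tau star cl rho"
proof -
  have star_star: "\<And>x. star (star x) = x" using antiaut unfolding involutive_antiaut_def by blast
  have bound: "\<exists>m. nu cl = m + m \<and> (\<forall>b\<in>B'. mat_val_ge nu (rho b) m)"
    if sb': "star_symmetric_basis smul tau star B'" for B'
  proof -
    interpret schur_orthogonality nu rho d star B' cl by (rule schur_orthogonality_basis[OF sb'])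
    show ?thesis
      by (rule invertible_form_val_bound[OF Om OmO Om' OmO' inv star_star])
        (use intertwining_basis_change[OF sb sb' Om int] in blast)
  qed
  obtain m where m: "nu cl = m + m" using bound[OF sb] by blast
  then show ?thesis using balancedI[OF bound m] by (intro conjI exI[of _ "- m"]) simp_all
qed

end

theorem mainTheorem4:
  fixes nu :: "'k::field \<Rightarrow> 'g::linordered_ab_group_add"
    and smul :: "'k \<Rightarrow> 'h::ring_1 \<Rightarrow> 'h"
    and tau :: "'h \<Rightarrow> 'k" and star :: "'h \<Rightarrow> 'h"
    and c :: "('h \<Rightarrow> 'k) \<Rightarrow> 'k"
    and B :: "'h set" and rho :: "'h \<Rightarrow> 'k mat" and d :: nat
  assumes "surj_valuation nu"
    and "residue_formally_real nu"
    and "split_semisimple smul"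
    and "symmetrizing_trace smul tau"
    and "involutive_antiaut smul star"
    and "schur_elements smul tau c"
    and "star_symmetric_basis smul tau star B"
    and "irreducible_rep smul rho d"
  shows
    "(\<forall>Omega. Omega \<in> carrier_mat d d \<and> mat_over (val_ring nu) Omega \<and>
        (\<forall>x\<in>B. Omega * rho x = transpose_mat (rho (star x)) * Omega) \<and>
        (\<forall>i<d. \<forall>j<d. i \<noteq> j \<longrightarrow> Omega $$ (i,j) \<in> val_ideal nu) \<and>
        (\<forall>i<d. Omega $$ (i,i) \<notin> val_ideal nu)
      \<longrightarrow> (\<exists>a. nu (c (character rho)) = - (a + a) \<and>
             balanced nu smul tau star (c (character rho)) rho \<and>
             (\<forall>v. v \<noteq> 0 \<and> nu v = a \<longrightarrow>
                (\<forall>x\<in>B. \<forall>s<d. \<forall>t<d.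
                   v * rho x $$ (s,t) \<in> val_ring nu \<and>
                   Omega $$ (t,t) * (v * rho (star x) $$ (t,s))
                     - Omega $$ (s,s) * (v * rho x $$ (s,t)) \<in> val_ideal nu))))
     \<and>
     (\<forall>Omega. Omega \<in> carrier_mat d d \<and> mat_over (val_ring nu) Omega \<and>
        transpose_mat Omega = Omega \<and>
        (\<exists>Omega'. Omega' \<in> carrier_mat d d \<and> mat_over (val_ring nu) Omega' \<and>
            Omega * Omega' = 1\<^sub>m d \<and> Omega' * Omega = 1\<^sub>m d) \<and>
        (\<forall>x\<in>B. Omega * rho x = transpose_mat (rho (star x)) * Omega)
      \<longrightarrow> (\<exists>a. nu (c (character rho)) = - (a + a)) \<and>
          balanced nu smul tau star (c (character rho)) rho)"
proof -
  interpret star_algebra_rep nu smul tau star c rho d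
    using assms by unfold_locales
  show ?thesis
  proof ((rule conjI; intro allI impI), goal_cases)
    case (1 Omega)
    then show ?case by (elim conjE) (rule diagonal_form_balanced[OF assms(7)])
  next
    case (2 Omega)
    then show ?case by (elim conjE exE) (rule invertible_form_balanced[OF assms(7)])
  qed
qed

end
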